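(* There is an absolute constant $C>0$ and an algorithm which, given a set $S$ of arms with reward distributions supported on $[0,1]$ and means $\theta_1\ge\theta_2\ge\dots\ge\theta_{|S|}$ (indexing unknown to the algorithm), an integer $1\le K\le|S|$, and parameters $\tau\in(0,1/2]$ with $(1-\tau)K\ge1$, $\phi\in(0,1]$, $\delta\in(0,1/2]$, always makes at most $C\frac{|S|}{\phi^2}(\log\frac1\tau+\log\frac1\delta)$ pulls and, with probability at least $1-\delta$, outputs an arm $i\in S$ with $$\theta_i\in\left[\theta_K-\phi,\ \theta_{\lceil(1-\tau)K\rceil}+\phi\right].$$
   Context: Stochastic bandit model: each pull of an arm yields an independent sample from that arm's unknown distribution; the algorithm chooses pulls adaptively. *)

theory Defs
  imports "HOL-Probability.Probability"
begin

text \<open>Arms are labelled by natural numbers. A history is the list of (arm pulled, reward observed).\<close>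
type_synonym hist = "(nat \<times> real) list"

datatype action = Pull nat | Output nat

text \<open>A (randomised) algorithm: given the arm set S, K, tau, phi, delta, an internal
  random seed u (uniform on [0,1]) and the history so far, it either pulls an arm or
  stops and outputs an arm.\<close>
type_synonym algorithm = "nat set \<Rightarrow> nat \<Rightarrow> real \<Rightarrow> real \<Rightarrow> real \<Rightarrow> real \<Rightarrow> hist \<Rightarrow> action"

definition pulls :: "nat \<Rightarrow> hist \<Rightarrow> nat" where
  "pulls j h = length (filter (\<lambda>p. fst p = j) h)"

text \<open>Reward-table model of the stochastic bandit: T (j, c) is the reward obtained at the
  (c+1)-st pull of arm j; all entries are independent with T (j,c) distributed as arm j.\<close>
fun run :: "(hist \<Rightarrow> action) \<Rightarrow> (nat \<times> nat \<Rightarrow> real) \<Rightarrow> nat \<Rightarrow> hist \<Rightarrow> (nat \<times> hist) option" where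
  "run pol T 0 h = None"
| "run pol T (Suc n) h =
     (case pol h of
        Output i \<Rightarrow> Some (i, h)
      | Pull j \<Rightarrow> run pol T n (h @ [(j, T (j, pulls j h))]))"

definition kth_largest :: "nat set \<Rightarrow> (nat \<Rightarrow> real) \<Rightarrow> nat \<Rightarrow> real" where
  "kth_largest S \<theta> k = rev (sort (map \<theta> (sorted_list_of_set S))) ! (k - 1)"

definition mean :: "real measure \<Rightarrow> real" where
  "mean M = (\<integral>x. x \<partial>M)"

text \<open>Joint probability space: internal seed times the independent reward table.\<close>
definition bandit_space :: "nat set \<Rightarrow> (nat \<Rightarrow> real measure) \<Rightarrow> (real \<times> (nat \<times> nat \<Rightarrow> real)) measure" where
  "bandit_space S D = uniform_measure lborel {0..1} \<Otimes>\<^sub>M (\<Pi>\<^sub>M p\<in>S \<times> UNIV. D (fst p))"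

end

theory Submission
  imports Defs
begin

text \<open>
  The algorithm works in rounds on a shrinking set of surviving arms. In round \<open>r\<close> every survivor
  is pulled a fresh batch of times, so that by Hoeffding's inequality its empirical mean is off by
  more than \<open>\<epsilon>\<^sub>r\<close> with probability at most \<open>p\<^sub>r\<close>; then between an eighth and a half of the
  survivors, those with the lowest or those with the highest estimates, are removed.

  A deterministic schedule maintains two counters: at least \<open>B\<close> survivors have mean
  \<open>\<ge> \<theta>\<^sub>K - \<Sum>\<^sub>s\<^sub><\<^sub>r 2\<epsilon>\<^sub>s\<close> and at least \<open>C\<close> survivors have mean \<open>\<le> \<theta>\<^sub>K\<^sub>' + \<Sum>\<^sub>s\<^sub><\<^sub>r 2\<epsilon>\<^sub>s\<close>, where
  \<open>K' = \<lceil>(1 - \<tau>)K\<rceil>\<close> and \<open>B + C\<close> is the number of survivors plus one plus an error budget.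
  Removing arms on the side of the smaller counter lowers the other counter by the number of removed
  arms, and lowers the smaller one by at most half of the budget, provided few estimates are wrong;
  the budget is then halved. When one arm survives both counters are positive, and since
  \<open>\<Sum> 2\<epsilon>\<^sub>s \<le> \<phi>\<close> that arm lies in the target interval.

  The number of wrong estimates in round \<open>r\<close> is controlled by Markov's inequality, because the
  survivors of round \<open>r\<close> depend only on earlier samples. As it suffices that all but a fraction of order
  \<open>\<tau> 2\<^sup>-\<^sup>r\<close> of the estimates are right, \<open>p\<^sub>r\<close> may be of order \<open>\<tau>\<delta>4\<^sup>-\<^sup>r\<close> rather than \<open>\<delta>/|S|\<close>; the batch
  sizes then grow like \<open>r (400/361)\<^sup>r\<close> while the number of survivors decays like \<open>(7/8)\<^sup>r\<close>,
  so the total number of pulls is \<open>O(|S| \<phi>\<^sup>-\<^sup>2 (log 1/\<tau> + log 1/\<delta>))\<close>.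
\<close>

definition lowest :: "(nat \<Rightarrow> real) \<Rightarrow> nat set \<Rightarrow> nat \<Rightarrow> nat set" where
  "lowest f A q = set (take q (sort_key f (sorted_list_of_set A)))"

lemma lowest_subset: "finite A \<Longrightarrow> lowest f A q \<subseteq> A"
  unfolding lowest_def by (auto dest: in_set_takeD)

lemma card_lowest: "finite A \<Longrightarrow> card (lowest f A q) = min q (card A)"
  unfolding lowest_def by (simp add: distinct_card distinct_sort)

lemma card_Diff_lowest: "finite A \<Longrightarrow> q \<le> card A \<Longrightarrow> card (A - lowest f A q) = card A - q"
  by (simp add: card_Diff_subset card_lowest finite_subset[OF lowest_subset] lowest_subset)

lemma lowest_le_rest:
  assumes "finite A" "j \<in> lowest f A q" "i \<in> A - lowest f A q"
  shows "f j \<le> f i"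
proof -
  let ?xs = "sort_key f (sorted_list_of_set A)"
  have "sorted (map f (take q ?xs) @ map f (drop q ?xs))"
    by (metis append_take_drop_id map_append sorted_sort_key)
  moreover have "j \<in> set (take q ?xs)" using assms(2) unfolding lowest_def .
  moreover have "i \<in> set (drop q ?xs)"
  proof -
    have "i \<in> set ?xs" "i \<notin> set (take q ?xs)" using assms unfolding lowest_def by auto
    then show ?thesis by (metis Un_iff append_take_drop_id set_append)
  qed
  ultimately show ?thesis by (auto simp: sorted_append)
qed

lemma insort_key_cong:
  assumes "\<And>y. y \<in> set xs \<Longrightarrow> (f x \<le> f y) = (g x \<le> g y)"
  shows "insort_key f x xs = insort_key g x xs"
  using assms by (induction xs) auto

lemma sort_key_cong:
  assumes "\<And>x y. x \<in> set xs \<Longrightarrow> y \<in> set xs \<Longrightarrow> (f x \<le> f y) = (g x \<le> g y)"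
  shows "sort_key f xs = sort_key g xs"
  using assms by (induction xs) (auto intro!: insort_key_cong)

lemma lowest_cong:
  assumes "finite A" "\<And>i j. i \<in> A \<Longrightarrow> j \<in> A \<Longrightarrow> (f i < f j) = (g i < g j)"
  shows "lowest f A q = lowest g A q"
proof -
  have "sort_key f (sorted_list_of_set A) = sort_key g (sorted_list_of_set A)"
    using assms by (intro sort_key_cong) (auto simp: not_less[symmetric])
  then show ?thesis unfolding lowest_def by simp
qed

lemma lowest_cong_eq: "finite A \<Longrightarrow> (\<And>j. j \<in> A \<Longrightarrow> f j = g j) \<Longrightarrow> lowest f A q = lowest g A q"
  by (rule lowest_cong) auto

lemma card_filter_add_filter_not:
  "finite A \<Longrightarrow> card {x\<in>A. P x} + card {x\<in>A. \<not> P x} = card A"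
  by (subst card_Un_disjoint[symmetric]) (auto intro: arg_cong[where f = card])

lemma card_filter_mono:
  "finite A \<Longrightarrow> (\<And>x. x \<in> A \<Longrightarrow> P x \<Longrightarrow> Q x) \<Longrightarrow> card {x\<in>A. P x} \<le> card {x\<in>A. Q x}"
  by (intro card_mono) auto

lemma card_filter_Diff_ge:
  assumes "finite A" "R \<subseteq> A" "card R \<le> q"
  shows "card {j \<in> A - R. P j} \<ge> card {j \<in> A. P j} - q"
proof -
  have "card {j \<in> A. P j} \<le> card ({j \<in> A - R. P j} \<union> R)"
    using assms by (intro card_mono) (auto intro: finite_subset)
  also have "\<dots> \<le> card {j \<in> A - R. P j} + card R" by (rule card_Un_le)
  finally show ?thesis using assms(3) by linarith
qed

lemma top_ge_threshold:
  assumes fin: "finite A" and B: "B \<le> card A" and hi: "card {j\<in>A. v j \<ge> L} \<ge> B"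
    and j: "j \<in> lowest (\<lambda>j. - v j) A B"
  shows "v j \<ge> L"
proof (rule ccontr)
  assume jl: "\<not> v j \<ge> L"
  let ?G = "lowest (\<lambda>j. - v j) A B"
  have finG: "finite ?G" using fin by (auto intro: finite_subset[OF lowest_subset])
  have "{i\<in>A. v i \<ge> L} \<subseteq> ?G - {j}"
  proof
    fix i assume i: "i \<in> {i\<in>A. v i \<ge> L}"
    have "i \<in> ?G"
    proof (rule ccontr)
      assume "i \<notin> ?G"
      then have "v i \<le> v j" using lowest_le_rest[OF fin j, of i] i by auto
      then show False using i jl by auto
    qed
    then show "i \<in> ?G - {j}" using i jl by auto
  qed
  then have "card {i\<in>A. v i \<ge> L} \<le> card (?G - {j})"
    using finG by (intro card_mono) auto
  also have "\<dots> = B - 1" using j card_lowest[OF fin] B by (simp add: card_Diff_singleton_if)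
  finally show False using hi j card_lowest[OF fin, of "\<lambda>j. - v j" B] B finG
    by (cases B) (auto simp: card_eq_0_iff)
qed

text \<open>If a well-estimated arm among the \<open>B\<close> arms with largest \<open>v\<close> is removed, every remaining arm
  has estimate at least \<open>L - \<epsilon>\<close>, so the remaining arms below \<open>L - 2\<epsilon>\<close> are all overestimated;
  otherwise all those well-estimated arms remain.\<close>
lemma cut_keeps_above:
  fixes A :: "nat set" and Y v :: "nat \<Rightarrow> real"
  assumes fin: "finite A" and q: "q + B + t \<le> card A + 1" and B: "B \<le> card A"
    and hi: "card {j\<in>A. v j \<ge> L} \<ge> B"
    and over: "card {j\<in>A. Y j > v j + \<epsilon>} < t"
    and under: "card {j \<in> lowest (\<lambda>j. - v j) A B. Y j < v j - \<epsilon>} \<le> \<beta>"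
    and eps: "\<epsilon> \<ge> 0"
  shows "card {j \<in> A - lowest Y A q. v j \<ge> L - 2*\<epsilon>} \<ge> B - \<beta>"
proof -
  let ?G = "lowest (\<lambda>j. - v j) A B"
  let ?R = "lowest Y A q"
  let ?Ga = "{j\<in>?G. \<not> Y j < v j - \<epsilon>}"
  have finG: "finite ?G" using fin by (auto intro: finite_subset[OF lowest_subset])
  have "card ?G = B" using card_lowest[OF fin] B by simp
  then have card_Ga: "card ?Ga \<ge> B - \<beta>"
    using under card_filter_add_filter_not[OF finG, of "\<lambda>j. Y j < v j - \<epsilon>"] by linarith
  have G_above: "\<And>j. j \<in> ?G \<Longrightarrow> v j \<ge> L" using top_ge_threshold[OF fin B hi] by auto
  show ?thesis
  proof (cases "?Ga \<subseteq> A - ?R")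
    case True
    have "?Ga \<subseteq> {j \<in> A - ?R. v j \<ge> L - 2*\<epsilon>}"
    proof
      fix j assume j: "j \<in> ?Ga"
      then have "v j \<ge> L" using G_above by auto
      then show "j \<in> {j \<in> A - ?R. v j \<ge> L - 2*\<epsilon>}" using True j eps by auto
    qed
    then have "card ?Ga \<le> card {j \<in> A - ?R. v j \<ge> L - 2*\<epsilon>}"
      using fin by (intro card_mono) auto
    then show ?thesis using card_Ga by linarith
  next
    case False
    then obtain a where a: "a \<in> ?Ga" "a \<in> ?R" using lowest_subset[OF fin, of "\<lambda>j. - v j" B] by auto
    have qA: "q \<le> card A" using q over by linarith
    have Ya: "Y a \<ge> L - \<epsilon>" using a G_above[of a] by auto
    have "{j \<in> A - ?R. \<not> v j \<ge> L - 2*\<epsilon>} \<subseteq> {j\<in>A. Y j > v j + \<epsilon>}"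
    proof
      fix j assume j: "j \<in> {j \<in> A - ?R. \<not> v j \<ge> L - 2*\<epsilon>}"
      then have "Y a \<le> Y j" using lowest_le_rest[OF fin a(2)] by auto
      then show "j \<in> {j\<in>A. Y j > v j + \<epsilon>}" using j Ya by auto
    qed
    then have "card {j \<in> A - ?R. \<not> v j \<ge> L - 2*\<epsilon>} \<le> card {j\<in>A. Y j > v j + \<epsilon>}"
      using fin by (intro card_mono) auto
    then have "card {j \<in> A - ?R. \<not> v j \<ge> L - 2*\<epsilon>} < t" using over by linarith
    moreover have "card (A - ?R) = card A - q" using card_Diff_lowest[OF fin qA] .
    moreover have "finite (A - ?R)" using fin by simp
    ultimately show ?thesis
      using card_filter_add_filter_not[of "A - ?R" "\<lambda>j. v j \<ge> L - 2*\<epsilon>"] q qA by auto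
  qed
qed

text \<open>
  The elimination schedule acts on tuples \<open>(n, B, C, S)\<close>: \<open>n\<close> arms survive, at least \<open>B\<close> of them
  lie above the lower level and at least \<open>C\<close> below the upper level, and \<open>S\<close> is the remaining
  budget of estimation errors. Up to
  \<open>slack n - 1\<close> overestimated survivors are tolerated.
\<close>

definition slack :: "nat \<Rightarrow> nat" where
  "slack n = (n + 7) div 8"

definition cut_size :: "nat \<times> nat \<times> nat \<times> nat \<Rightarrow> nat" where
  "cut_size = (\<lambda>(n, B, C, S). if n \<le> 1 then 0 else min (n + 1 - min B C - slack n) (n div 2))"

definition sched_step :: "nat \<times> nat \<times> nat \<times> nat \<Rightarrow> nat \<times> nat \<times> nat \<times> nat" where
  "sched_step = (\<lambda>(n, B, C, S).
     if n \<le> 1 then (n, B, C, S)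
     else let q = cut_size (n, B, C, S) in
       if B \<le> C then (n - q, B - (S - S div 2), C - q, S div 2)
       else (n - q, B - q, C - (S - S div 2), S div 2))"

definition sched_inv :: "nat \<Rightarrow> nat \<times> nat \<times> nat \<times> nat \<Rightarrow> bool" where
  "sched_inv K = (\<lambda>(n, B, C, S). 1 \<le> n \<and> 1 \<le> B \<and> B \<le> n \<and> 1 \<le> C \<and> C \<le> n \<and>
     B + C = n + 1 + S \<and> 8 * S \<le> n \<and> B \<le> K)"

lemma slack_bounds: "n \<ge> 1 \<Longrightarrow> slack n \<ge> 1 \<and> 8 * slack n \<le> n + 7 \<and> 8 * slack n \<ge> n"
  unfolding slack_def by auto

lemma cut_size_bounds:
  assumes "sched_inv K (n, B, C, S)" "n \<ge> 2"
  shows "cut_size (n, B, C, S) + min B C + slack n \<le> n + 1"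
    and "8 * cut_size (n, B, C, S) \<ge> n" and "2 * cut_size (n, B, C, S) \<le> n"
  using assms slack_bounds[of n] unfolding sched_inv_def cut_size_def by auto

lemma sched_inv_step: "sched_inv K x \<Longrightarrow> sched_inv K (sched_step x)"
proof (cases x)
  case (fields n B C S)
  assume inv: "sched_inv K x"
  show ?thesis
  proof (cases "n \<le> 1")
    case False
    then have "n \<ge> 2" by simp
    note q = cut_size_bounds[OF inv[unfolded fields] this]
    show ?thesis using inv False q slack_bounds[of n]
      unfolding fields sched_step_def sched_inv_def Let_def by (auto split: if_splits)
  qed (use inv fields in \<open>simp add: sched_step_def\<close>)
qed

lemma sched_step_shrinks:
  assumes "sched_inv K x" "fst x \<ge> 2"
  shows "8 * fst (sched_step x) \<le> 7 * fst x" "2 * fst (sched_step x) \<ge> fst x"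
  using assms cut_size_bounds[of K "fst x" "fst (snd x)" "fst (snd (snd x))" "snd (snd (snd x))"]
  by (cases x; auto simp: sched_step_def Let_def)+

lemma sched_step_idle: "fst x \<le> 1 \<Longrightarrow> sched_step x = x"
  unfolding sched_step_def by (cases x) auto

lemma real_div2_ge: "real (x div 2) \<ge> (real x - 1) / 2"
proof -
  have "x \<le> 2 * (x div 2) + 1" by arith
  then have "real x \<le> real (2 * (x div 2) + 1)" by (simp only: of_nat_le_iff)
  then show ?thesis by simp
qed

lemma real_diff_div2_ge: "real (x - x div 2) \<ge> real x / 2"
proof -
  have "x \<le> 2 * (x - x div 2)" by arith
  then have "real x \<le> real (2 * (x - x div 2))" by (simp only: of_nat_le_iff)
  then show ?thesis by simp
qed

text \<open>Cell \<open>(j, c)\<close> of the table rebuilt from a history is the reward of the \<open>(c+1)\<close>-st pull of arm \<open>j\<close>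
  (junk value \<open>0\<close> for pulls that have not happened).\<close>
definition table_of_hist :: "hist \<Rightarrow> nat \<times> nat \<Rightarrow> real" where
  "table_of_hist h = (\<lambda>p. let l = filter (\<lambda>x. fst x = fst p) h in
     if snd p < length l then snd (l ! snd p) else 0)"

locale elim_alg =
  fixes S :: "nat set" and K :: nat and \<tau> \<phi> \<delta> :: real
begin

definition n :: nat where
  "n = card S"

definition K_tau :: nat where
  "K_tau = nat \<lceil>(1 - \<tau>) * real K\<rceil>"

definition budget0 :: nat where
  "budget0 = min (K - K_tau) (n div 8)"

definition sched :: "nat \<Rightarrow> nat \<times> nat \<times> nat \<times> nat" where
  "sched r = (sched_step ^^ r) (n, K_tau + budget0, n - K_tau + 1, budget0)"

definition alive :: "nat \<Rightarrow> nat" where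
  "alive r = fst (sched r)"

definition n_lo :: "nat \<Rightarrow> nat" where
  "n_lo r = fst (snd (sched r))"

definition n_hi :: "nat \<Rightarrow> nat" where
  "n_hi r = fst (snd (snd (sched r)))"

definition budget :: "nat \<Rightarrow> nat" where
  "budget r = snd (snd (snd (sched r)))"

definition active :: "nat \<Rightarrow> bool" where
  "active r \<longleftrightarrow> alive r \<ge> 2"

definition cut_low :: "nat \<Rightarrow> bool" where
  "cut_low r \<longleftrightarrow> n_lo r \<le> n_hi r"

definition n_cut :: "nat \<Rightarrow> nat" where
  "n_cut r = cut_size (sched r)"

definition spend :: "nat \<Rightarrow> nat" where
  "spend r = budget r - budget r div 2"

definition guarded :: "nat \<Rightarrow> nat" where
  "guarded r = min (n_lo r) (n_hi r)"

text \<open>With \<open>\<epsilon>\<^sub>r = \<phi>/40 \<cdot> (19/20)\<^sup>r\<close> the accumulated error \<open>\<Sum> 2\<epsilon>\<^sub>r\<close> stays below \<open>\<phi>\<close>, while the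
  batch sizes, which grow like \<open>(r+5) (400/361)\<^sup>r\<close>, are dominated by the decay \<open>(7/8)\<^sup>r\<close> of the number
  of survivors.\<close>
definition acc :: "nat \<Rightarrow> real" where
  "acc r = \<phi> / 40 * (19/20) ^ r"

definition conf :: "nat \<Rightarrow> real" where
  "conf r = \<tau> * \<delta> / 2 ^ (2 * r + 8)"

definition batch :: "nat \<Rightarrow> nat" where
  "batch r = (if active r then nat \<lceil>ln (1 / conf r) / (2 * acc r ^ 2)\<rceil> else 0)"

definition offset :: "nat \<Rightarrow> nat" where
  "offset r = (\<Sum>s<r. batch s)"

definition est :: "(nat \<times> nat \<Rightarrow> real) \<Rightarrow> nat \<Rightarrow> nat \<Rightarrow> real" where
  "est T j r = (\<Sum>c\<in>{offset r..<offset r + batch r}. T (j, c)) / real (batch r)"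

text \<open>Removing the arms with the highest estimates is removing those with the lowest score
  under orientation \<open>-1\<close>.\<close>
definition orient :: "nat \<Rightarrow> real" where
  "orient r = (if cut_low r then 1 else - 1)"

definition score :: "(nat \<times> nat \<Rightarrow> real) \<Rightarrow> nat \<Rightarrow> nat \<Rightarrow> real" where
  "score T r j = orient r * est T j r"

primrec surv :: "(nat \<times> nat \<Rightarrow> real) \<Rightarrow> nat \<Rightarrow> nat set" where
  "surv T 0 = S"
| "surv T (Suc r) = surv T r - lowest (score T r) (surv T r) (n_cut r)"

definition round_seq :: "(nat \<times> nat \<Rightarrow> real) \<Rightarrow> nat \<Rightarrow> (nat \<times> nat) list" where
  "round_seq T r = concat (map (\<lambda>a. map (\<lambda>i. (a, offset r + i)) [0..<batch r])
     (sorted_list_of_set (surv T r)))"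

definition pull_seq :: "(nat \<times> nat \<Rightarrow> real) \<Rightarrow> nat \<Rightarrow> (nat \<times> nat) list" where
  "pull_seq T k = concat (map (round_seq T) [0..<k])"

definition final_arm :: "(nat \<times> nat \<Rightarrow> real) \<Rightarrow> nat" where
  "final_arm T = Min (surv T n)"

text \<open>It rebuilds the observed part of the reward table from
  the history and replays the table cells requested by the algorithm; since which cell comes next
  depends only on cells already read, this follows the run on the true table.\<close>
definition policy :: "hist \<Rightarrow> action" where
  "policy h = (let T = table_of_hist h; sq = pull_seq T n in
     if length h < length sq then Pull (fst (sq ! length h)) else Output (final_arm T))"

end

locale elim_params = elim_alg +
  assumes finS: "finite S" and neS: "S \<noteq> {}" and K1: "1 \<le> K" and Kn: "K \<le> card S"
    and tau: "0 < \<tau>" "\<tau> \<le> 1/2" and tauK: "(1 - \<tau>) * K \<ge> 1"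
    and phi: "0 < \<phi>" "\<phi> \<le> 1" and delta: "0 < \<delta>" "\<delta> \<le> 1/2"
begin

lemma n_pos: "n \<ge> 1"
  using finS neS unfolding n_def by (simp add: Suc_leI card_gt_0_iff)

lemma K_tau_bounds: "K_tau \<ge> 1" "K_tau \<le> K" "real (K - K_tau) + 1 \<ge> \<tau> * K"
proof -
  have a: "(1 - \<tau>) * real K \<ge> 1" using tauK by simp
  have b: "(1 - \<tau>) * real K \<le> real K" using tau by (simp add: mult_le_cancel_right2)
  have c: "real_of_int \<lceil>(1 - \<tau>) * real K\<rceil> < (1 - \<tau>) * real K + 1" by linarith
  have d: "\<lceil>(1 - \<tau>) * real K\<rceil> \<le> int K" using b by (simp add: ceiling_le_iff)
  have e: "\<lceil>(1 - \<tau>) * real K\<rceil> \<ge> 1" using a by (simp add: one_le_ceiling)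
  show "K_tau \<ge> 1" using e unfolding K_tau_def by linarith
  show "K_tau \<le> K" using d unfolding K_tau_def by linarith
  have "real K_tau = real_of_int \<lceil>(1 - \<tau>) * real K\<rceil>" using e unfolding K_tau_def by simp
  then show "real (K - K_tau) + 1 \<ge> \<tau> * K"
    using c d e \<open>K_tau \<le> K\<close> by (simp add: of_nat_diff algebra_simps)
qed

lemma sched_Suc: "sched (Suc r) = sched_step (sched r)"
  by (simp add: sched_def)

lemma sched_eq: "sched r = (alive r, n_lo r, n_hi r, budget r)"
  by (simp add: alive_def n_lo_def n_hi_def budget_def)

lemma sched_inv_sched: "sched_inv K (sched r)"
proof (induction r)
  case 0
  show ?case using K_tau_bounds n_pos Kn
    unfolding sched_def sched_inv_def budget0_def n_def by auto
qed (simp add: sched_Suc sched_inv_step)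

lemma sched_facts: "alive r \<ge> 1" "n_lo r \<ge> 1" "n_lo r \<le> alive r" "n_hi r \<ge> 1" "n_hi r \<le> alive r"
  "n_lo r + n_hi r = alive r + 1 + budget r" "8 * budget r \<le> alive r" "n_lo r \<le> K"
  using sched_inv_sched[of r] unfolding sched_eq sched_inv_def by auto

lemma alive_0: "alive 0 = n" and n_hi_0: "n_hi 0 = n - K_tau + 1" and budget_0: "budget 0 = budget0"
  by (simp_all add: alive_def n_lo_def n_hi_def budget_def sched_def)

lemma sched_Suc_idle: "\<not> active r \<Longrightarrow> sched (Suc r) = sched r"
  using sched_step_idle[of "sched r"] unfolding active_def alive_def sched_Suc by auto

lemma cut_idle: "\<not> active r \<Longrightarrow> n_cut r = 0"
  unfolding n_cut_def active_def alive_def cut_size_def by (cases "sched r") auto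

lemma sched_Suc_active:
  assumes "active r"
  shows "alive (Suc r) = alive r - n_cut r" "budget (Suc r) = budget r div 2"
    and "cut_low r \<Longrightarrow> n_lo (Suc r) = n_lo r - spend r \<and> n_hi (Suc r) = n_hi r - n_cut r"
    and "\<not> cut_low r \<Longrightarrow> n_lo (Suc r) = n_lo r - n_cut r \<and> n_hi (Suc r) = n_hi r - spend r"
  using assms unfolding alive_def n_lo_def n_hi_def budget_def sched_Suc n_cut_def active_def
    cut_low_def spend_def by (cases "sched r"; simp add: sched_step_def Let_def)+

lemma cut_bounds:
  assumes "active r"
  shows "n_cut r + guarded r + slack (alive r) \<le> alive r + 1"
    and "8 * n_cut r \<ge> alive r" "2 * n_cut r \<le> alive r"
  using cut_size_bounds[of K "alive r" "n_lo r" "n_hi r" "budget r"] sched_inv_sched[of r] assms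
  unfolding n_cut_def guarded_def active_def sched_eq by auto

lemma alive_Suc: "alive (Suc r) = alive r - n_cut r"
  using sched_Suc_active(1)[of r] sched_Suc_idle[of r] cut_idle[of r] unfolding alive_def
  by (cases "active r") auto

lemma cut_le_alive: "n_cut r \<le> alive r"
  using cut_bounds(3)[of r] cut_idle[of r] by (cases "active r") auto

lemma alive_Suc_le: "alive (Suc r) \<le> alive r"
  using alive_Suc by simp

lemma alive_antimono: "r \<le> s \<Longrightarrow> alive s \<le> alive r"
  by (induction s rule: dec_induct) (auto intro: le_trans[OF alive_Suc_le])

lemma active_le: "active r \<Longrightarrow> s \<le> r \<Longrightarrow> active s"
  using alive_antimono[of s r] unfolding active_def by auto

lemma alive_le: "alive r \<le> max 1 (n - r)"
proof (induction r)
  case (Suc r)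
  have "active r \<Longrightarrow> alive (Suc r) < alive r"
    using cut_bounds(2)[of r] alive_Suc[of r] unfolding active_def by linarith
  then show ?case using Suc alive_Suc_le[of r] unfolding active_def by fastforce
qed (simp add: alive_0)

lemma alive_final: "alive n = 1"
  using alive_le[of n] sched_facts(1)[of n] by simp

lemma alive_geometric: "active r \<Longrightarrow> real (alive r) \<le> real n * (7/8) ^ r"
proof (induction r)
  case (Suc r)
  have ar: "active r" using active_le[OF Suc.prems, of r] by simp
  have "8 * alive (Suc r) \<le> 7 * alive r"
    using sched_step_shrinks(1)[OF sched_inv_sched[of r]] ar
    unfolding active_def alive_def sched_Suc by simp
  then have "real (alive (Suc r)) \<le> 7/8 * real (alive r)" by linarith
  also have "\<dots> \<le> 7/8 * (real n * (7/8) ^ r)" using Suc.IH[OF ar] by simp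
  finally show ?case by (simp add: field_simps)
qed (simp add: alive_0)

lemma n_lo_n_hi_idle: "\<not> active r \<Longrightarrow> n_lo (Suc r) = n_lo r \<and> n_hi (Suc r) = n_hi r"
  using sched_Suc_idle unfolding n_lo_def n_hi_def by simp

lemma guarded_le: "guarded r \<le> K" "guarded r \<le> alive r"
  using sched_facts[of r] unfolding guarded_def by auto

lemma budget_lower: "real (budget r) + 1 \<ge> (real budget0 + 1) / 2 ^ r"
proof (induction r)
  case (Suc r)
  show ?case
  proof (cases "active r")
    case True
    have "real (budget (Suc r)) + 1 \<ge> (real (budget r) + 1) / 2"
      using sched_Suc_active(2)[OF True] real_div2_ge[of "budget r"] by simp
    moreover have "(real (budget r) + 1) / 2 \<ge> (real budget0 + 1) / 2 ^ Suc r"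
      using Suc by (simp add: field_simps)
    ultimately show ?thesis by linarith
  next
    case False
    then have "budget (Suc r) = budget r" using sched_Suc_idle unfolding budget_def by simp
    moreover have "(real budget0 + 1) / 2 ^ Suc r \<le> (real budget0 + 1) / 2 ^ r"
      by (simp add: field_simps)
    ultimately show ?thesis using Suc by linarith
  qed
qed (simp add: budget_0)

lemma spend_lower: "real (spend r) + 1 \<ge> (real budget0 + 1) / 2 ^ (r + 1)"
proof -
  have "real (spend r) + 1 \<ge> (real (budget r) + 1) / 2"
    unfolding spend_def using real_diff_div2_ge[of "budget r"] by (simp add: add_divide_distrib)
  moreover have "(real budget0 + 1) / 2 ^ (r + 1) \<le> (real (budget r) + 1) / 2"
    using budget_lower[of r] by (simp add: field_simps)
  ultimately show ?thesis by linarith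
qed

lemma guarded_le_budget0: "real (guarded r) \<le> 8 * (real budget0 + 1) / \<tau>"
proof (cases "budget0 = K - K_tau")
  case True
  have "real (guarded r) \<le> real K" using guarded_le by simp
  also have "\<dots> \<le> (real budget0 + 1) / \<tau>" using K_tau_bounds(3) True tau by (simp add: field_simps)
  also have "\<dots> \<le> 8 * (real budget0 + 1) / \<tau>" using tau by (simp add: field_simps)
  finally show ?thesis .
next
  case False
  then have "budget0 = n div 8" unfolding budget0_def by auto
  then have "n \<le> 8 * (budget0 + 1)" by arith
  then have "real n \<le> real (8 * (budget0 + 1))" by (simp only: of_nat_le_iff)
  then have "real n \<le> 8 * (real budget0 + 1)" by simp
  moreover have "real (guarded r) \<le> real n" using guarded_le(2)[of r] alive_antimono[of 0 r] alive_0 by simp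
  moreover have "\<tau> * (8 * (real budget0 + 1)) \<le> 8 * (real budget0 + 1)"
    using tau by (intro mult_left_le_one_le) auto
  then have "8 * (real budget0 + 1) \<le> 8 * (real budget0 + 1) / \<tau>" using tau by (simp add: le_divide_eq)
  ultimately show ?thesis by linarith
qed

lemma guarded_le_spend: "real (guarded r) \<le> 2 ^ (r + 4) / \<tau> * (real (spend r) + 1)"
proof -
  have "real (guarded r) \<le> 8 * (real budget0 + 1) / \<tau>" by (rule guarded_le_budget0)
  also have "\<dots> \<le> 8 * (2 ^ (r + 1) * (real (spend r) + 1)) / \<tau>"
    using spend_lower[of r] tau by (intro divide_right_mono mult_left_mono) (auto simp: field_simps)
  also have "\<dots> = 2 ^ (r + 4) / \<tau> * (real (spend r) + 1)" by (simp add: power_add)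
  finally show ?thesis .
qed

end
lemma filter_concat_map_Pair:
  assumes "distinct ls"
  shows "filter (\<lambda>p. fst p = j) (concat (map (\<lambda>a. map (\<lambda>i. (a, g i)) xs) ls)) =
    (if j \<in> set ls then map (\<lambda>i. (j, g i)) xs else [])"
  using assms by (induction ls) (auto simp: filter_empty_conv)

text \<open>Pulling the arms in the order of a pulls-numbered list of cells reads exactly these cells of
  the reward table.\<close>
definition pulls_numbered :: "(nat \<times> nat) list \<Rightarrow> bool" where
  "pulls_numbered xs \<longleftrightarrow>
     (\<forall>j. map snd (filter (\<lambda>p. fst p = j) xs) = [0..<length (filter (\<lambda>p. fst p = j) xs)])"

lemma pulls_numbered_take:
  assumes "pulls_numbered xs"
  shows "pulls_numbered (take k xs)"
  unfolding pulls_numbered_def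
proof
  fix j
  let ?a = "filter (\<lambda>p. fst p = j) (take k xs)"
  let ?b = "filter (\<lambda>p. fst p = j) (drop k xs)"
  have f: "filter (\<lambda>p. fst p = j) xs = ?a @ ?b" by (metis append_take_drop_id filter_append)
  have "map snd (filter (\<lambda>p. fst p = j) xs) = [0..<length (filter (\<lambda>p. fst p = j) xs)]"
    using assms unfolding pulls_numbered_def by blast
  then have "map snd ?a @ map snd ?b = [0..<length ?a + length ?b]"
    unfolding f map_append length_append .
  also have "\<dots> = [0..<length ?a] @ [length ?a..<length ?a + length ?b]"
    by (rule upt_add_eq_append) simp
  finally show "map snd ?a = [0..<length ?a]"
    using append_eq_append_conv[of "map snd ?a" "[0..<length ?a]"] by simp
qed

lemma pulls_numbered_nth:
  assumes "pulls_numbered xs" and k: "k < length xs"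
  shows "snd (xs ! k) = length (filter (\<lambda>p. fst p = fst (xs ! k)) (take k xs))"
proof -
  let ?j = "fst (xs ! k)"
  have "map snd (filter (\<lambda>p. fst p = ?j) (take (Suc k) xs)) =
      [0..<length (filter (\<lambda>p. fst p = ?j) (take (Suc k) xs))]"
    using pulls_numbered_take[OF assms(1)] unfolding pulls_numbered_def by blast
  moreover have "take (Suc k) xs = take k xs @ [xs ! k]" using k by (simp add: take_Suc_conv_app_nth)
  ultimately show ?thesis by simp
qed

lemma list_eq_map_Pair:
  assumes cF: "map snd F = [0..<length F]" and fF: "\<forall>x\<in>set F. fst x = a"
  shows "F = map (Pair a) [0..<length F]"
proof (rule nth_equalityI)
  show "length F = length (map (Pair a) [0..<length F])" by simp
  fix i assume i: "i < length F"
  have "snd (F ! i) = i" using cF i by (metis length_map nth_map nth_upt add_0)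
  moreover have "fst (F ! i) = a" using fF i nth_mem by blast
  ultimately show "F ! i = map (Pair a) [0..<length F] ! i" using i by (cases "F ! i") auto
qed

lemma table_of_hist_take:
  assumes col: "pulls_numbered xs" and p: "p \<in> set (take k xs)"
  shows "table_of_hist (map (\<lambda>p. (fst p, T p)) (take k xs)) p = T p"
proof -
  obtain a c where pc: "p = (a, c)" by (cases p) auto
  define F where "F = filter (\<lambda>x. fst x = a) (take k xs)"
  have cF: "map snd F = [0..<length F]"
    using pulls_numbered_take[OF col] unfolding F_def pulls_numbered_def by blast
  have fF: "\<forall>x\<in>set F. fst x = a" unfolding F_def by auto
  have F: "F = map (Pair a) [0..<length F]" by (rule list_eq_map_Pair[OF cF fF])
  have "(a, c) \<in> set F" using p pc unfolding F_def by auto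
  then have "(a, c) \<in> set (map (Pair a) [0..<length F])" using F by metis
  then have cl: "c < length F" by auto
  have fm: "filter (\<lambda>x. fst x = a) (map (\<lambda>p. (fst p, T p)) (take k xs)) = map (\<lambda>p. (fst p, T p)) F"
    unfolding F_def by (simp add: filter_map comp_def)
  have "F ! c = (a, c)" using cl F by (metis nth_map nth_upt add_0 length_map)
  moreover have "table_of_hist (map (\<lambda>p. (fst p, T p)) (take k xs)) (a, c) =
     (if c < length (map (\<lambda>p. (fst p, T p)) F) then snd ((map (\<lambda>p. (fst p, T p)) F) ! c) else 0)"
    unfolding table_of_hist_def Let_def fst_conv snd_conv fm ..
  ultimately show ?thesis using cl unfolding pc by simp
qed

context elim_params
begin

lemma surv_facts: "surv T r \<subseteq> S \<and> finite (surv T r) \<and> card (surv T r) = alive r"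
proof (induction r)
  case (Suc r)
  then have fin: "finite (surv T r)" by simp
  have "card (surv T (Suc r)) = alive r - n_cut r"
    using card_Diff_lowest[OF fin] cut_le_alive[of r] Suc by simp
  then show ?case using Suc alive_Suc[of r] by auto
qed (simp add: finS alive_0 n_def)

lemma surv_subset: "surv T r \<subseteq> S" and finite_surv: "finite (surv T r)" and card_surv: "card (surv T r) = alive r"
  using surv_facts by auto

lemma surv_mono: "r \<le> s \<Longrightarrow> surv T s \<subseteq> surv T r"
  by (induction s rule: dec_induct) auto

lemma est_cong: "(\<And>c. c \<in> {offset r..<offset r + batch r} \<Longrightarrow> T' (j, c) = T (j, c)) \<Longrightarrow> est T' j r = est T j r"
  unfolding est_def by simp

lemma surv_cong:
  assumes "\<And>s j c. s < r \<Longrightarrow> j \<in> surv T s \<Longrightarrow> c \<in> {offset s..<offset s + batch s} \<Longrightarrow> T' (j, c) = T (j, c)"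
  shows "surv T' r = surv T r"
  using assms
proof (induction r)
  case 0 then show ?case by simp
next
  case (Suc r)
  have ih: "surv T' r = surv T r"
  proof (rule Suc.IH)
    fix s j c assume "s < r" "j \<in> surv T s" "c \<in> {offset s..<offset s + batch s}"
    then show "T' (j, c) = T (j, c)" by (intro Suc.prems) auto
  qed
  have "lowest (score T' r) (surv T r) (n_cut r) = lowest (score T r) (surv T r) (n_cut r)"
  proof (rule lowest_cong_eq[OF finite_surv])
    fix j assume "j \<in> surv T r"
    then have "est T' j r = est T j r" by (intro est_cong Suc.prems) auto
    then show "score T' r j = score T r j" unfolding score_def by simp
  qed
  moreover have "surv T' (Suc r) = surv T' r - lowest (score T' r) (surv T' r) (n_cut r)" by simp
  ultimately show ?case using ih by simp
qed

lemma set_round_seq: "set (round_seq T r) = {(a, offset r + i) | a i. a \<in> surv T r \<and> i < batch r}"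
  unfolding round_seq_def using finite_surv by auto

lemma length_round_seq: "length (round_seq T r) = alive r * batch r"
proof -
  have "length (round_seq T r) = sum_list (map (\<lambda>a. batch r) (sorted_list_of_set (surv T r)))"
    unfolding round_seq_def by (simp add: length_concat comp_def)
  also have "\<dots> = card (surv T r) * batch r" using finite_surv by (simp add: sum_list_triv)
  finally show ?thesis using card_surv by simp
qed

lemma pull_seq_Suc: "pull_seq T (Suc k) = pull_seq T k @ round_seq T k" unfolding pull_seq_def by simp

lemma length_pull_seq: "length (pull_seq T k) = (\<Sum>r<k. alive r * batch r)"
  by (induction k) (auto simp: pull_seq_Suc length_round_seq, simp add: pull_seq_def)

lemma set_pull_seq: "set (pull_seq T k) = (\<Union>r<k. set (round_seq T r))"
  unfolding pull_seq_def by auto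

lemma filter_round_seq: "filter (\<lambda>p. fst p = j) (round_seq T r) = (if j \<in> surv T r then map (\<lambda>i. (j, offset r + i)) [0..<batch r] else [])"
  unfolding round_seq_def using finite_surv by (subst filter_concat_map_Pair) auto

definition n_pulled :: "(nat \<times> nat \<Rightarrow> real) \<Rightarrow> nat \<Rightarrow> nat \<Rightarrow> nat" where
  "n_pulled T j k = (\<Sum>r<k. if j \<in> surv T r then batch r else 0)"

lemma n_pulled_surv: "j \<in> surv T k \<Longrightarrow> n_pulled T j k = offset k"
proof -
  assume j: "j \<in> surv T k"
  have "\<And>r. r < k \<Longrightarrow> j \<in> surv T r" using surv_mono j by (meson less_imp_le subsetD)
  then show ?thesis unfolding n_pulled_def offset_def by simp
qed

lemma filter_pull_seq: "filter (\<lambda>p. fst p = j) (pull_seq T k) = map (Pair j) [0..<n_pulled T j k]"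
proof (induction k)
  case 0 then show ?case by (simp add: pull_seq_def n_pulled_def)
next
  case (Suc k)
  show ?case
  proof (cases "j \<in> surv T k")
    case True
    have c1: "n_pulled T j (Suc k) = offset k + batch k" using n_pulled_surv[OF True] True by (simp add: n_pulled_def)
    have e1: "[0..<offset k + batch k] = [0..<offset k] @ [offset k..<offset k + batch k]" by (rule upt_add_eq_append) simp
    have ee: "(\<lambda>i. offset k + i) = (\<lambda>i. i + offset k)" by (rule ext) simp
    have e2: "map (\<lambda>i. offset k + i) [0..<batch k] = [offset k..<offset k + batch k]"
      unfolding ee map_add_upt by (simp add: add.commute)
    have "filter (\<lambda>p. fst p = j) (pull_seq T (Suc k)) = map (Pair j) [0..<n_pulled T j k] @ map (\<lambda>i. (j, offset k + i)) [0..<batch k]"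
      unfolding pull_seq_Suc filter_append Suc.IH filter_round_seq using True by simp
    also have "\<dots> = map (Pair j) ([0..<offset k] @ map (\<lambda>i. offset k + i) [0..<batch k])"
      using n_pulled_surv[OF True] by simp
    also have "\<dots> = map (Pair j) [0..<n_pulled T j (Suc k)]" unfolding e2 c1 e1 ..
    finally show ?thesis .
  next
    case False
    have c1: "n_pulled T j (Suc k) = n_pulled T j k" using False by (simp add: n_pulled_def)
    show ?thesis unfolding pull_seq_Suc filter_append Suc.IH filter_round_seq c1 using False by simp
  qed
qed

lemma pull_seq_numbered: "pulls_numbered (pull_seq T k)"
  unfolding pulls_numbered_def filter_pull_seq by (simp add: comp_def)

lemma in_pull_seq: "sa < k \<Longrightarrow> j \<in> surv T sa \<Longrightarrow> offset sa \<le> c \<Longrightarrow> c < offset sa + batch sa \<Longrightarrow> (j,c) \<in> set (pull_seq T k)"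
  unfolding set_pull_seq set_round_seq by (auto intro!: bexI[of _ sa] exI[of _ "c - offset sa"])

lemma surv_cong_pull_seq:
  assumes "\<And>p. p \<in> set (pull_seq T k) \<Longrightarrow> T' p = T p" "s \<le> k"
  shows "surv T' s = surv T s"
proof (rule surv_cong)
  fix sa j c assume "sa < s" "j \<in> surv T sa" "c \<in> {offset sa..<offset sa + batch sa}"
  then show "T' (j, c) = T (j, c)" using assms by (intro assms(1) in_pull_seq) auto
qed

lemma pull_seq_cong:
  assumes "\<And>p. p \<in> set (pull_seq T k) \<Longrightarrow> T' p = T p"
  shows "pull_seq T' k = pull_seq T k"
proof -
  have "\<And>r. r < k \<Longrightarrow> round_seq T' r = round_seq T r"
    using surv_cong_pull_seq[OF assms] unfolding round_seq_def by auto
  then have "map (round_seq T') [0..<k] = map (round_seq T) [0..<k]" by (intro map_cong) auto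
  then show ?thesis unfolding pull_seq_def by (rule arg_cong)
qed

lemma pull_seq_nth_cong:
  assumes "k < length (pull_seq T R)" "\<And>p. p \<in> set (take k (pull_seq T R)) \<Longrightarrow> T' p = T p"
  shows "pull_seq T' R ! k = pull_seq T R ! k"
  using assms
proof (induction R)
  case 0 then show ?case by (simp add: pull_seq_def)
next
  case (Suc R)
  show ?case
  proof (cases "k < length (pull_seq T R)")
    case True
    have "take k (pull_seq T (Suc R)) = take k (pull_seq T R)" using True by (simp add: pull_seq_Suc)
    then have "pull_seq T' R ! k = pull_seq T R ! k" using Suc True by auto
    moreover have "length (pull_seq T' R) = length (pull_seq T R)" by (simp add: length_pull_seq)
    ultimately show ?thesis using True by (simp add: pull_seq_Suc nth_append)
  next
    case False
    have "set (pull_seq T R) \<subseteq> set (take k (pull_seq T (Suc R)))"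
      using False by (simp add: pull_seq_Suc take_append)
    then have ag: "\<And>p. p \<in> set (pull_seq T R) \<Longrightarrow> T' p = T p" using Suc.prems by auto
    have "pull_seq T' R = pull_seq T R" by (rule pull_seq_cong[OF ag])
    moreover have "surv T' R = surv T R" by (rule surv_cong_pull_seq[OF ag le_refl])
    then have "round_seq T' R = round_seq T R" unfolding round_seq_def by simp
    ultimately show ?thesis by (simp add: pull_seq_Suc)
  qed
qed

definition hist :: "(nat \<times> nat \<Rightarrow> real) \<Rightarrow> nat \<Rightarrow> hist" where
  "hist T k = map (\<lambda>p. (fst p, T p)) (take k (pull_seq T n))"

definition n_total :: nat where
  "n_total = (\<Sum>r<n. alive r * batch r)"

lemma length_pull_seq_total: "length (pull_seq T n) = n_total" unfolding n_total_def length_pull_seq ..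

lemma table_of_hist_hist: "p \<in> set (take k (pull_seq T n)) \<Longrightarrow> table_of_hist (hist T k) p = T p"
  unfolding hist_def using table_of_hist_take[OF pull_seq_numbered] by blast

lemma policy_hist_Pull:
  assumes "k < n_total"
  shows "policy (hist T k) = Pull (fst (pull_seq T n ! k))"
proof -
  have l: "length (hist T k) = k" using assms length_pull_seq_total by (simp add: hist_def)
  have "pull_seq (table_of_hist (hist T k)) n ! k = pull_seq T n ! k"
    using assms length_pull_seq_total by (intro pull_seq_nth_cong) (auto intro: table_of_hist_hist)
  then show ?thesis using l assms unfolding policy_def by (simp add: Let_def length_pull_seq n_total_def)
qed

lemma policy_hist_Output: "policy (hist T n_total) = Output (final_arm T)"
proof -
  have l: "length (hist T n_total) = n_total" using length_pull_seq_total by (simp add: hist_def)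
  have ag: "\<And>p. p \<in> set (pull_seq T n) \<Longrightarrow> table_of_hist (hist T n_total) p = T p"
    using table_of_hist_hist[of _ n_total T] length_pull_seq_total by simp
  have "surv (table_of_hist (hist T n_total)) n = surv T n" by (rule surv_cong_pull_seq[OF ag le_refl])
  then show ?thesis using l unfolding policy_def final_arm_def by (simp add: Let_def length_pull_seq n_total_def)
qed

lemma run_policy_hist: "k \<le> n_total \<Longrightarrow> run policy T (n_total - k + 1 + e) (hist T k) = Some (final_arm T, hist T n_total)"
proof (induction "n_total - k" arbitrary: k)
  case 0
  then have "k = n_total" by simp
  then show ?case using policy_hist_Output by simp
next
  case (Suc d)
  then have k: "k < n_total" by simp
  let ?x = "pull_seq T n ! k"
  have pl: "pulls (fst ?x) (hist T k) = snd ?x"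
    using pulls_numbered_nth[OF pull_seq_numbered, of k T n] k length_pull_seq_total
    unfolding pulls_def hist_def by (simp add: filter_map comp_def)
  have hs: "hist T (Suc k) = hist T k @ [(fst ?x, T (fst ?x, snd ?x))]"
    using k length_pull_seq_total unfolding hist_def by (simp add: take_Suc_conv_app_nth)
  have e: "n_total - k + 1 + e = Suc (n_total - Suc k + 1 + e)" using k by simp
  show ?case unfolding e using policy_hist_Pull[OF k] pl hs Suc.hyps(1)[of "Suc k"] Suc.hyps(2) k
    by simp
qed

lemma run_policy: "run policy T (n_total + 1 + e) [] = Some (final_arm T, hist T n_total)"
  using run_policy_hist[of 0 T e] by (simp add: hist_def)

lemma length_hist_total: "length (hist T n_total) = n_total" using length_pull_seq_total by (simp add: hist_def)

lemma hist_arms: "set (map fst (hist T n_total)) \<subseteq> S"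
  using subsetD[OF surv_subset] length_pull_seq_total unfolding hist_def by (auto simp: set_pull_seq set_round_seq dest!: in_set_takeD)

lemma surv_final: "surv T n = {final_arm T}"
proof -
  have "card (surv T n) = 1" using card_surv alive_final by simp
  then obtain x where "surv T n = {x}" by (auto simp: card_Suc_eq)
  then show ?thesis unfolding final_arm_def by simp
qed

end


lemma sum_Suc_mult_power_le: fixes x :: real assumes "0 \<le> x" "x < 1"
  shows "(\<Sum>r<R. (real r + 1) * x ^ r) \<le> 1 / (1 - x)^2"
proof -
  have eq: "(\<Sum>r<R. (real r + 1) * x ^ r) * (1 - x)^2 = 1 - (real R + 1) * x ^ R + real R * x ^ (R + 1)"
    by (induction R) (auto simp: power2_eq_square algebra_simps)
  have "(real R + 1) * x ^ R - real R * x ^ (R + 1) = x ^ R * (real R * (1 - x) + 1)"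
    by (simp add: algebra_simps)
  moreover have "x ^ R * (real R * (1 - x) + 1) \<ge> 0" using assms by simp
  ultimately have "(\<Sum>r<R. (real r + 1) * x ^ r) * (1 - x)^2 \<le> 1" using eq by linarith
  moreover have "(1 - x)^2 > 0" using assms by simp
  ultimately show ?thesis by (simp add: field_simps)
qed

lemma sum_power_le: fixes x :: real assumes "0 \<le> x" "x < 1"
  shows "(\<Sum>r<R. x ^ r) \<le> 1 / (1 - x)"
proof -
  have "(\<Sum>r<R. x ^ r) = (1 - x ^ R) / (1 - x)" using assms by (simp add: sum_gp_strict)
  also have "\<dots> \<le> 1 / (1 - x)" using assms by (intro divide_right_mono) auto
  finally show ?thesis .
qed

lemma nat_ceiling_le: fixes x :: real assumes "x \<ge> 0" shows "real (nat \<lceil>x\<rceil>) \<le> x + 1"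
proof -
  have "\<lceil>x\<rceil> \<ge> 0" using assms by simp
  then have "real (nat \<lceil>x\<rceil>) = real_of_int \<lceil>x\<rceil>" by simp
  also have "\<dots> \<le> x + 1" by (rule of_int_ceiling_le_add_one)
  finally show ?thesis .
qed

context elim_params
begin

definition log_term :: real where
  "log_term = ln (1 / \<tau>) + ln (1 / \<delta>)"

lemma log_term_ge: "log_term \<ge> 2 * ln 2" "log_term \<ge> 1"
proof -
  have "ln (1/\<tau>) \<ge> ln 2" using tau by (subst ln_le_cancel_iff) (auto simp: field_simps)
  moreover have "ln (1/\<delta>) \<ge> ln 2" using delta by (subst ln_le_cancel_iff) (auto simp: field_simps)
  ultimately show "log_term \<ge> 2 * ln 2" unfolding log_term_def by simp
  then show "log_term \<ge> 1" using ln_2_less_1 ln2_ge_two_thirds by linarith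
qed

lemma conf_pos: "conf r > 0" unfolding conf_def using tau delta by simp

lemma ln_inv_conf_le: "ln (1 / conf r) \<le> (real r + 5) * log_term"
proof -
  have t0: "\<tau> > 0" "\<delta> > 0" using tau delta by auto
  have "1 / conf r = 2 ^ (2*r+8) / (\<tau> * \<delta>)" unfolding conf_def by simp
  then have "ln (1 / conf r) = ln (2 ^ (2*r+8)) - ln (\<tau> * \<delta>)" using t0 by (simp add: ln_div)
  also have "\<dots> = real (2*r+8) * ln 2 - (ln \<tau> + ln \<delta>)" using t0 by (simp add: ln_mult ln_realpow)
  also have "ln (1/\<tau>) = - ln \<tau>" "ln (1/\<delta>) = - ln \<delta>" using t0 by (simp_all add: ln_div)
  ultimately have "ln (1 / conf r) = real (2*r+8) * ln 2 + (ln (1/\<tau>) + ln (1/\<delta>))" by simp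
  also have "\<dots> = (real r + 4) * (2 * ln 2) + log_term" unfolding log_term_def by (simp add: algebra_simps)
  also have "\<dots> \<le> (real r + 4) * log_term + log_term" using log_term_ge(1) by (intro add_right_mono mult_left_mono) auto
  finally show ?thesis by (simp add: algebra_simps)
qed

lemma ln_inv_conf_pos: "ln (1 / conf r) > 0"
proof -
  have a: "\<tau> * \<delta> \<le> 1/2 * (1/2)" using tau delta by (intro mult_mono) auto
  have b: "\<tau> * \<delta> / 2 ^ (2 * r + 8) \<le> \<tau> * \<delta> / 1"
    using tau delta by (intro divide_left_mono) auto
  have "conf r \<le> \<tau> * \<delta>" unfolding conf_def using b by simp
  then have "conf r < 1" using a by linarith
  then show ?thesis using conf_pos by simp
qed

lemma acc_pos: "acc r > 0" unfolding acc_def using phi by simp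

lemma batch_le: "real (batch r) \<le> (if active r then 800 * (real r + 5) * log_term / \<phi>^2 * (400/361)^r + 1 else 0)"
proof (cases "active r")
  case True
  have "real (batch r) = real (nat \<lceil>ln (1 / conf r) / (2 * acc r ^ 2)\<rceil>)" using True unfolding batch_def by simp
  also have "\<dots> \<le> ln (1 / conf r) / (2 * acc r ^ 2) + 1"
    using ln_inv_conf_pos[of r] acc_pos[of r] by (intro nat_ceiling_le) simp
  also have "ln (1 / conf r) / (2 * acc r ^ 2) = ln (1 / conf r) * (800 / \<phi>^2 * (400/361)^r)"
  proof -
    have e1: "((19/20::real)^r)^2 = ((19/20)^2)^r" by (simp add: power_mult[symmetric] mult.commute)
    have e2: "((19/20::real)^2)^r = 1 / (400/361)^r" by (simp add: power2_eq_square power_divide)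
    have "acc r ^ 2 = \<phi>^2 / 1600 * ((19/20)^r)^2" unfolding acc_def by (simp add: power_mult_distrib power2_eq_square)
    also have "\<dots> = \<phi>^2 / 1600 / (400/361)^r" unfolding e1 e2 by simp
    finally have ee: "acc r ^ 2 = \<phi>^2 / 1600 / (400/361)^r" .
    show ?thesis unfolding ee using phi by (simp add: field_simps)
  qed
  also have "\<dots> \<le> (real r + 5) * log_term * (800 / \<phi>^2 * (400/361)^r)"
    using ln_inv_conf_le by (intro mult_right_mono) auto
  finally show ?thesis using True by (simp add: field_simps)
qed (simp add: batch_def)

lemma pulls_round_le:
  defines "x \<equiv> 350/361 :: real"
  shows "real (alive r * batch r) \<le>
    800 * real n * log_term / \<phi>^2 * ((real r + 1) * x ^ r + 4 * x ^ r) + real n * (7/8)^r"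
proof (cases "active r")
  case True
  have "real (alive r * batch r) \<le>
      (real n * (7/8)^r) * (800 * (real r + 5) * log_term / \<phi>^2 * (400/361)^r + 1)"
    using alive_geometric[OF True] batch_le[of r] True by (simp add: mult_mono)
  also have "\<dots> = 800 * real n * log_term / \<phi>^2 * ((real r + 5) * ((7/8)^r * (400/361)^r))
      + real n * (7/8)^r"
    by (simp add: algebra_simps add_divide_distrib)
  also have "(7/8::real)^r * (400/361)^r = x ^ r" by (simp add: x_def power_mult_distrib[symmetric])
  finally show ?thesis by (simp add: algebra_simps)
next
  case False
  then show ?thesis using log_term_ge by (simp add: batch_def x_def)
qed

lemma n_total_le: "real n_total \<le> 1000000 * real n / \<phi>^2 * log_term"
proof -
  let ?x = "350/361 :: real"
  define c where "c = 800 * real n * log_term / \<phi>^2"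
  have c: "c \<ge> 0" using log_term_ge by (simp add: c_def)
  have "real n_total = (\<Sum>r<n. real (alive r * batch r))" unfolding n_total_def by simp
  also have "\<dots> \<le> (\<Sum>r<n. c * ((real r + 1) * ?x ^ r + 4 * ?x ^ r) + real n * (7/8)^r)"
    unfolding c_def by (rule sum_mono) (rule pulls_round_le)
  also have "\<dots> = c * ((\<Sum>r<n. (real r + 1) * ?x ^ r) + 4 * (\<Sum>r<n. ?x ^ r))
      + real n * (\<Sum>r<n. (7/8::real)^r)"
    by (simp add: sum.distrib sum_distrib_left[symmetric])
  also have "\<dots> \<le> c * (1 / (1 - ?x)^2 + 4 * (1 / (1 - ?x))) + real n * (1 / (1 - 7/8))"
    using c by (intro add_mono mult_left_mono sum_Suc_mult_power_le sum_power_le) auto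
  also have "\<dots> \<le> c * 1209 + real n * 8"
    using c by (intro add_mono mult_left_mono) (auto simp: power2_eq_square)
  also have "real n * 8 \<le> 8 * real n / \<phi>^2 * log_term"
  proof -
    have "\<phi>^2 \<le> 1" using phi by (simp add: power_le_one)
    then have "1 \<le> 1 / \<phi>^2" using phi by (simp add: field_simps)
    then have "1 * 1 \<le> 1 / \<phi>^2 * log_term" using log_term_ge by (intro mult_mono) auto
    then have "real n * 8 * 1 \<le> real n * 8 * (1 / \<phi>^2 * log_term)" by (intro mult_left_mono) auto
    then show ?thesis by (simp add: mult.commute mult.left_commute)
  qed
  finally show ?thesis by (simp add: c_def field_simps)
qed

end
lemma sets_fiber_finite:
  assumes "finite Z" "\<And>T. T \<in> space M \<Longrightarrow> g T \<in> Z" "\<And>z. z \<in> Z \<Longrightarrow> {T\<in>space M. g T = z} \<in> sets M"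
    and "\<And>T1 T2. T1 \<in> space M \<Longrightarrow> T2 \<in> space M \<Longrightarrow> g T1 = g T2 \<Longrightarrow> f T1 = f T2"
  shows "{T\<in>space M. f T = y} \<in> sets M"
proof -
  let ?Z = "{z\<in>Z. \<exists>T0\<in>space M. g T0 = z \<and> f T0 = y}"
  have "{T\<in>space M. f T = y} = (\<Union>z\<in>?Z. {T\<in>space M. g T = z})"
  proof
    show "{T\<in>space M. f T = y} \<subseteq> (\<Union>z\<in>?Z. {T\<in>space M. g T = z})"
    proof
      fix T assume T: "T \<in> {T\<in>space M. f T = y}"
      then have "g T \<in> ?Z" using assms(2) by blast
      then show "T \<in> (\<Union>z\<in>?Z. {T\<in>space M. g T = z})" using T by blast
    qed
    show "(\<Union>z\<in>?Z. {T\<in>space M. g T = z}) \<subseteq> {T\<in>space M. f T = y}"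
    proof
      fix T assume "T \<in> (\<Union>z\<in>?Z. {T\<in>space M. g T = z})"
      then obtain z where z: "z \<in> ?Z" "T \<in> {T\<in>space M. g T = z}" by (rule UN_E)
      from z(1) obtain T0 where T0: "T0 \<in> space M" "g T0 = z" "f T0 = y" by blast
      have "f T = f T0" using z(2) T0 by (intro assms(4)) auto
      then show "T \<in> {T\<in>space M. f T = y}" using z(2) T0 by simp
    qed
  qed
  also have "\<dots> \<in> sets M" using assms(1,3) by (intro sets.finite_UN) auto
  finally show ?thesis .
qed

lemma sets_pattern_eq:
  assumes "finite J" "\<And>j. j \<in> J \<Longrightarrow> A j \<in> sets M"
  shows "{T\<in>space M. {j\<in>J. T \<in> A j} = z} \<in> sets M"
proof -
  have "{T\<in>space M. {j\<in>J. T \<in> A j} = z} =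
     (if z \<subseteq> J then space M \<inter> (\<Inter>j\<in>J. if j \<in> z then A j else space M - A j) else {})"
    by (auto split: if_splits)
  also have "\<dots> \<in> sets M"
  proof (cases "z \<subseteq> J")
    case True
    let ?B = "\<lambda>j. if j \<in> z then A j else space M - A j"
    have B: "\<And>j. j \<in> J \<Longrightarrow> ?B j \<in> sets M" using assms by auto
    show ?thesis
    proof (cases "J = {}")
      case True then show ?thesis by simp
    next
      case False
      then have "(\<Inter>j\<in>J. ?B j) \<in> sets M" using assms(1) B by (intro sets.finite_INT) auto
      then show ?thesis using True by (simp add: sets.Int_space_eq1[OF \<open>(\<Inter>j\<in>J. ?B j) \<in> sets M\<close>])
    qed
  qed simp
  finally show ?thesis .
qed

lemma sets_pattern_pred:
  assumes "finite J" "\<And>j. j \<in> J \<Longrightarrow> A j \<in> sets M"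
  shows "{T\<in>space M. Q {j\<in>J. T \<in> A j}} \<in> sets M"
proof -
  have "{T\<in>space M. (Q {j\<in>J. T \<in> A j}) = True} \<in> sets M"
    by (rule sets_fiber_finite[where Z="Pow J" and g="\<lambda>T. {j\<in>J. T \<in> A j}"])
       (use assms in \<open>auto intro: sets_pattern_eq\<close>)
  then show ?thesis by simp
qed

lemma sum_if_card: "finite J \<Longrightarrow> (\<Sum>j\<in>J. if P j then 1 else 0 :: real) = real (card {j\<in>J. P j})"
  by (simp add: sum.inter_filter[symmetric])

lemma (in prob_space) expectation_count:
  assumes "finite J" "\<And>j. j \<in> J \<Longrightarrow> A j \<in> events"
  shows "integrable M (\<lambda>\<omega>. real (card {j\<in>J. \<omega> \<in> A j}))"
    and "expectation (\<lambda>\<omega>. real (card {j\<in>J. \<omega> \<in> A j})) = (\<Sum>j\<in>J. prob (A j))"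
proof -
  have eq: "real (card {j\<in>J. \<omega> \<in> A j}) = (\<Sum>j\<in>J. indicator (A j) \<omega>)" for \<omega>
    using sum_if_card[OF assms(1), of "\<lambda>j. \<omega> \<in> A j"] by (simp add: indicator_def of_bool_def)
  have int: "integrable M (indicator (A j) :: _ \<Rightarrow> real)" if "j \<in> J" for j
    using assms(2)[OF that] by (intro integrable_real_indicator) (auto simp: less_top[symmetric])
  show "integrable M (\<lambda>\<omega>. real (card {j\<in>J. \<omega> \<in> A j}))"
    unfolding eq using int by (rule Bochner_Integration.integrable_sum)
  show "expectation (\<lambda>\<omega>. real (card {j\<in>J. \<omega> \<in> A j})) = (\<Sum>j\<in>J. prob (A j))"
    unfolding eq using int assms(2)
    by (subst Bochner_Integration.integral_sum) (auto simp: Int_absorb2 sets.sets_into_space)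
qed

lemma (in prob_space) prob_count_ge:
  assumes J: "finite J" and MF: "\<And>j. j \<in> J \<Longrightarrow> Mj j \<in> events" "\<And>j. j \<in> J \<Longrightarrow> Fj j \<in> events"
    and ind: "\<And>j. j \<in> J \<Longrightarrow> prob (Mj j \<inter> Fj j) = prob (Mj j) * prob (Fj j)"
    and pF: "\<And>j. j \<in> J \<Longrightarrow> prob (Fj j) \<le> p"
    and cM: "\<And>\<omega>. \<omega> \<in> space M \<Longrightarrow> card {j\<in>J. \<omega> \<in> Mj j} \<le> mm"
    and s: "s > 0" and p0: "p \<ge> 0"
  shows "prob {\<omega>\<in>space M. real (card {j\<in>J. \<omega> \<in> Mj j \<inter> Fj j}) \<ge> s} \<le> real mm * p / s"
proof -
  have MF_events: "\<And>j. j \<in> J \<Longrightarrow> Mj j \<inter> Fj j \<in> events" using MF by auto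
  note count_MF = expectation_count[of J "\<lambda>j. Mj j \<inter> Fj j", OF J MF_events]
  note count_M = expectation_count[of J Mj, OF J MF(1)]
  have "expectation (\<lambda>\<omega>. real (card {j\<in>J. \<omega> \<in> Mj j \<inter> Fj j})) = (\<Sum>j\<in>J. prob (Mj j \<inter> Fj j))"
    by (rule count_MF(2))
  also have "\<dots> \<le> (\<Sum>j\<in>J. prob (Mj j) * p)"
    using ind pF by (intro sum_mono) (auto intro: mult_left_mono)
  also have "\<dots> = p * expectation (\<lambda>\<omega>. real (card {j\<in>J. \<omega> \<in> Mj j}))"
    by (simp add: count_M(2) sum_distrib_left mult.commute)
  also have "\<dots> \<le> p * expectation (\<lambda>\<omega>. real mm)"
    using cM p0 count_M(1) by (intro mult_left_mono integral_mono) auto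
  finally have E: "expectation (\<lambda>\<omega>. real (card {j\<in>J. \<omega> \<in> Mj j \<inter> Fj j})) \<le> p * real mm"
    by (simp add: prob_space)
  have "prob {\<omega>\<in>space M. real (card {j\<in>J. \<omega> \<in> Mj j \<inter> Fj j}) \<ge> s}
      \<le> expectation (\<lambda>\<omega>. real (card {j\<in>J. \<omega> \<in> Mj j \<inter> Fj j})) / s"
    using count_MF(1) s by (intro integral_Markov_inequality_measure[where A="space M"]) auto
  also have "\<dots> \<le> real mm * p / s" using E s by (simp add: divide_right_mono mult.commute)
  finally show ?thesis .
qed

locale elim_bandit = elim_params +
  fixes D :: "nat \<Rightarrow> real measure"
  assumes Dps: "\<And>j. j \<in> S \<Longrightarrow> prob_space (D j)"
    and Dsets: "\<And>j. j \<in> S \<Longrightarrow> sets (D j) = sets borel"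
    and Dae: "\<And>j. j \<in> S \<Longrightarrow> AE x in D j. x \<in> {0..1}"
begin

definition cells :: "(nat \<times> nat) set" where
  "cells = S \<times> UNIV"

definition cell_dist :: "nat \<times> nat \<Rightarrow> real measure" where
  "cell_dist p = D (fst p)"

definition tables :: "(nat \<times> nat \<Rightarrow> real) measure" where
  "tables = PiM cells cell_dist"

definition \<theta> :: "nat \<Rightarrow> real" where
  "\<theta> j = mean (D j)"

lemma prob_space_cell_dist: "p \<in> cells \<Longrightarrow> prob_space (cell_dist p)" unfolding cells_def cell_dist_def using Dps by auto
lemma sets_cell_dist: "p \<in> cells \<Longrightarrow> sets (cell_dist p) = sets borel" unfolding cells_def cell_dist_def using Dsets by auto

lemma prob_space_tables: "prob_space tables" unfolding tables_def by (intro prob_space_PiM prob_space_cell_dist)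

sublocale tab: prob_space tables by (rule prob_space_tables)

lemma measurable_cell_PiM: "J \<subseteq> cells \<Longrightarrow> p \<in> J \<Longrightarrow> (\<lambda>T. T p) \<in> borel_measurable (PiM J cell_dist)"
  using measurable_component_singleton[of p J cell_dist] sets_cell_dist[of p]
  by (subst measurable_cong_sets[OF refl, of _ "cell_dist p"]) auto

lemma measurable_cell: "p \<in> cells \<Longrightarrow> (\<lambda>T. T p) \<in> borel_measurable tables"
  unfolding tables_def by (rule measurable_cell_PiM) auto

lemma offset_Suc: "offset (Suc r) = offset r + batch r" unfolding offset_def by simp

lemma offset_mono: "s \<le> r \<Longrightarrow> offset s \<le> offset r" unfolding offset_def by (intro sum_mono2) auto

lemma measurable_est:
  assumes "\<And>c. c \<in> {offset r..<offset r + batch r} \<Longrightarrow> (\<lambda>T. T (j, c)) \<in> borel_measurable M"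
  shows "(\<lambda>T. est T j r) \<in> borel_measurable M"
  unfolding est_def using assms by (intro borel_measurable_divide borel_measurable_sum) auto

lemma measurable_score:
  assumes "\<And>c. c \<in> {offset r..<offset r + batch r} \<Longrightarrow> (\<lambda>T. T (j, c)) \<in> borel_measurable M"
  shows "(\<lambda>T. score T r j) \<in> borel_measurable M"
  unfolding score_def using measurable_est[OF assms] by (intro borel_measurable_times) auto

text \<open>The survivor set takes finitely many values, and \<open>surv T (r+1)\<close> is determined by \<open>surv T r\<close>
  together with the order pattern of the scores of round \<open>r\<close>.\<close>
lemma sets_surv_eq:
  assumes "\<And>j c. j \<in> S \<Longrightarrow> c < offset r \<Longrightarrow> (\<lambda>T. T (j, c)) \<in> borel_measurable M"
  shows "{T\<in>space M. surv T r = A} \<in> sets M"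
  using assms
proof (induction r arbitrary: A)
  case 0 then show ?case by (cases "A = S") auto
next
  case (Suc r)
  have cm: "\<And>j c. j \<in> S \<Longrightarrow> c < offset r \<Longrightarrow> (\<lambda>T. T (j, c)) \<in> borel_measurable M"
    using Suc.prems offset_mono[of r "Suc r"] by auto
  have km: "\<And>j. j \<in> S \<Longrightarrow> (\<lambda>T. score T r j) \<in> borel_measurable M"
    by (rule measurable_score) (use Suc.prems in \<open>auto simp: offset_Suc\<close>)
  define pat where "pat = (\<lambda>T. {ij \<in> S \<times> S. score T r (fst ij) < score T r (snd ij)})"
  let ?g = "\<lambda>T. (surv T r, pat T)"
  show ?case
  proof (rule sets_fiber_finite[where Z="Pow S \<times> Pow (S \<times> S)" and g="?g"])
    show "finite (Pow S \<times> Pow (S \<times> S))" using finS by simp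
    show "\<And>T. T \<in> space M \<Longrightarrow> ?g T \<in> Pow S \<times> Pow (S \<times> S)" using surv_subset unfolding pat_def by auto
    fix z assume "z \<in> Pow S \<times> Pow (S \<times> S)"
    have a: "{T\<in>space M. surv T r = fst z} \<in> sets M" by (rule Suc.IH[OF cm])
    have b: "{T\<in>space M. {ij \<in> S \<times> S. T \<in> {T\<in>space M. score T r (fst ij) < score T r (snd ij)}} = snd z} \<in> sets M"
      by (rule sets_pattern_eq) (use finS km in \<open>auto intro!: borel_measurable_less\<close>)
    have "{T\<in>space M. ?g T = z} = {T\<in>space M. surv T r = fst z} \<inter>
        {T\<in>space M. {ij \<in> S \<times> S. T \<in> {T\<in>space M. score T r (fst ij) < score T r (snd ij)}} = snd z}"
      unfolding pat_def by (cases z) auto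
    then show "{T\<in>space M. ?g T = z} \<in> sets M" using a b by simp
  next
    fix T1 T2 assume "T1 \<in> space M" "T2 \<in> space M" "?g T1 = ?g T2"
    then have s: "surv T1 r = surv T2 r" and pt: "pat T1 = pat T2" by auto
    have "lowest (score T1 r) (surv T1 r) (n_cut r) = lowest (score T2 r) (surv T1 r) (n_cut r)"
    proof (rule lowest_cong[OF finite_surv])
      fix i j assume "i \<in> surv T1 r" "j \<in> surv T1 r"
      then have "(i, j) \<in> S \<times> S" using surv_subset by auto
      then show "(score T1 r i < score T1 r j) = (score T2 r i < score T2 r j)"
        using pt unfolding pat_def by (auto simp: set_eq_iff)
    qed
    then show "surv T1 (Suc r) = surv T2 (Suc r)" using s by simp
  qed
qed

lemma sets_surv_pred:
  assumes "\<And>j c. j \<in> S \<Longrightarrow> c < offset r \<Longrightarrow> (\<lambda>T. T (j, c)) \<in> borel_measurable M"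
  shows "{T\<in>space M. Q (surv T r)} \<in> sets M"
proof -
  have "{T\<in>space M. Q (surv T r) = True} \<in> sets M"
    by (rule sets_fiber_finite[where Z = "Pow S" and g = "\<lambda>T. surv T r"])
      (use finS surv_subset sets_surv_eq[OF assms] in auto)
  then show ?thesis by simp
qed

lemma cells_nonempty: "cells \<noteq> {}" unfolding cells_def using neS by auto

lemma cell_rv: "p \<in> cells \<Longrightarrow> (\<lambda>T. T p) \<in> measurable tables (cell_dist p)"
  unfolding tables_def by (rule measurable_component_singleton)

lemma indep_cells: "tab.indep_vars cell_dist (\<lambda>p T. T p) cells"
proof (subst tab.indep_vars_iff_distr_eq_PiM'[OF cells_nonempty cell_rv])
  have "distr tables (PiM cells cell_dist) (\<lambda>x. \<lambda>i\<in>cells. x i) = distr tables tables (\<lambda>x. x)"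
    by (rule distr_cong) (auto simp: tables_def space_PiM PiE_restrict)
  also have "\<dots> = tables" by simp
  also have "tables = PiM cells (\<lambda>i. distr tables (cell_dist i) (\<lambda>x. x i))"
    unfolding tables_def by (rule PiM_cong) (auto intro!: distr_PiM_component[symmetric] prob_space_cell_dist)
  finally show "distr tables (PiM cells cell_dist) (\<lambda>x. \<lambda>i\<in>cells. x i) = PiM cells (\<lambda>i. distr tables (cell_dist i) (\<lambda>x. x i))" .
qed

text \<open>The survivors of round \<open>r\<close> are a function of the cells \<open>S \<times> {..<offset r}\<close>, the round-\<open>r\<close>
  estimate of arm \<open>j\<close> of the disjoint block \<open>{j} \<times> {offset r..<offset r + batch r}\<close>.\<close>
lemma indep_surv_est:
  assumes j: "j \<in> S" and Bs: "Bs \<in> sets borel"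
  shows "tab.prob ({T\<in>space tables. Q (surv T r)} \<inter> {T\<in>space tables. est T j r \<in> Bs}) =
    tab.prob {T\<in>space tables. Q (surv T r)} * tab.prob {T\<in>space tables. est T j r \<in> Bs}"
proof -
  define A1 where "A1 = S \<times> {..<offset r}"
  define B1 where "B1 = {j} \<times> {offset r..<offset r + batch r}"
  have A1I: "A1 \<subseteq> cells" and B1I: "B1 \<subseteq> cells" unfolding A1_def B1_def cells_def using j by auto
  have dis: "A1 \<inter> B1 = {}" unfolding A1_def B1_def by auto
  let ?ra = "\<lambda>\<omega>. restrict (\<lambda>i. \<omega> i) A1"
  let ?rb = "\<lambda>\<omega>. restrict (\<lambda>i. \<omega> i) B1"
  have iv: "tab.indep_var (PiM A1 cell_dist) ?ra (PiM B1 cell_dist) ?rb"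
    by (rule tab.indep_var_restrict[OF indep_cells dis A1I B1I])
  define Xa where "Xa = {T'\<in>space (PiM A1 cell_dist). Q (surv T' r)}"
  define Xb where "Xb = {T'\<in>space (PiM B1 cell_dist). est T' j r \<in> Bs}"
  have Xa: "Xa \<in> sets (PiM A1 cell_dist)"
    unfolding Xa_def by (rule sets_surv_pred, rule measurable_cell_PiM[OF A1I]) (auto simp: A1_def)
  have Xb: "Xb \<in> sets (PiM B1 cell_dist)"
  proof -
    have "(\<lambda>T. est T j r) \<in> borel_measurable (PiM B1 cell_dist)"
      by (rule measurable_est, rule measurable_cell_PiM[OF B1I]) (auto simp: B1_def)
    from measurable_sets[OF this Bs] show ?thesis unfolding Xb_def by (simp add: Int_def conj_commute)
  qed
  have raM: "?ra \<in> measurable tables (PiM A1 cell_dist)" unfolding tables_def using A1I by (simp add: measurable_restrict_subset)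
  have rbM: "?rb \<in> measurable tables (PiM B1 cell_dist)" unfolding tables_def using B1I by (simp add: measurable_restrict_subset)
  have sa: "surv (?ra T) r = surv T r" for T
  proof (rule surv_cong)
    fix s j' c assume "s < r" "j' \<in> surv T s" "c \<in> {offset s..<offset s + batch s}"
    moreover have "offset s + batch s \<le> offset r" using offset_mono[of "Suc s" r] \<open>s < r\<close> by (simp add: offset_Suc)
    ultimately show "?ra T (j', c) = T (j', c)" using surv_subset unfolding A1_def by auto
  qed
  have sb: "est (?rb T) j r = est T j r" for T
    by (rule est_cong) (auto simp: B1_def)
  have ea: "?ra -` Xa \<inter> space tables = {T\<in>space tables. Q (surv T r)}"
    using measurable_space[OF raM] sa unfolding Xa_def by auto
  have eb: "?rb -` Xb \<inter> space tables = {T\<in>space tables. est T j r \<in> Bs}"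
    using measurable_space[OF rbM] sb unfolding Xb_def by auto
  have eab: "(\<lambda>x. (?ra x, ?rb x)) -` (Xa \<times> Xb) \<inter> space tables =
      {T\<in>space tables. Q (surv T r)} \<inter> {T\<in>space tables. est T j r \<in> Bs}"
    using ea eb by auto
  show ?thesis using tab.indep_varD[OF iv Xa Xb] unfolding eab ea eb .
qed

lemma batch_pos: "active r \<Longrightarrow> batch r > 0"
proof -
  assume a: "active r"
  have "ln (1 / conf r) / (2 * acc r ^ 2) > 0" using ln_inv_conf_pos[of r] acc_pos[of r] by (intro divide_pos_pos) auto
  then show ?thesis using a unfolding batch_def by simp
qed

lemma distr_cell: "j \<in> S \<Longrightarrow> distr tables borel (\<lambda>T. T (j, c)) = D j"
proof -
  assume j: "j \<in> S"
  have jc: "(j, c) \<in> cells" using j unfolding cells_def by auto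
  have "distr tables borel (\<lambda>T. T (j, c)) = distr tables (cell_dist (j, c)) (\<lambda>T. T (j, c))"
    by (rule distr_cong) (use sets_cell_dist[OF jc] in auto)
  also have "\<dots> = cell_dist (j, c)" unfolding tables_def by (rule distr_PiM_component[OF prob_space_cell_dist jc])
  finally show ?thesis by (simp add: cell_dist_def)
qed

lemma indep_cells_arm:
  assumes j: "j \<in> S" and Ic: "Ic \<noteq> {}"
  shows "tab.indep_vars (\<lambda>_. borel) (\<lambda>c T. T (j, c)) Ic"
proof -
  have rv: "(\<lambda>T. T (j, c)) \<in> borel_measurable tables" if "c \<in> Ic" for c
    by (rule measurable_cell) (use j in \<open>simp add: cells_def\<close>)
  show ?thesis
  proof (subst tab.indep_vars_iff_distr_eq_PiM'[OF Ic rv])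
    have "distr tables (PiM Ic (\<lambda>_. borel)) (\<lambda>x. \<lambda>i\<in>Ic. x (j, i)) =
        distr (PiM cells cell_dist) (PiM Ic (\<lambda>i. cell_dist (j, i))) (\<lambda>\<omega>. \<lambda>i\<in>Ic. \<omega> (j, i))"
      unfolding tables_def by (rule distr_cong) (auto intro!: sets_PiM_cong simp: cell_dist_def Dsets j)
    also have "\<dots> = PiM Ic (\<lambda>i. cell_dist (j, i))"
      by (rule distr_PiM_reindex) (use j in \<open>auto simp: cells_def inj_on_def intro: prob_space_cell_dist\<close>)
    also have "\<dots> = PiM Ic (\<lambda>i. distr tables borel (\<lambda>T. T (j, i)))"
      by (rule PiM_cong) (auto simp: distr_cell[OF j] cell_dist_def)
    finally show "distr tables (PiM Ic (\<lambda>_. borel)) (\<lambda>x. \<lambda>i\<in>Ic. x (j, i)) =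
        PiM Ic (\<lambda>i. distr tables borel (\<lambda>T. T (j, i)))" .
  qed
qed

lemma expectation_cell: "j \<in> S \<Longrightarrow> tab.expectation (\<lambda>T. T (j, c)) = \<theta> j"
proof -
  assume j: "j \<in> S"
  have "tab.expectation (\<lambda>T. T (j, c)) = integral\<^sup>L (distr tables borel (\<lambda>T. T (j, c))) (\<lambda>x. x)"
    using j by (subst integral_distr) (auto intro: measurable_cell simp: cells_def)
  also have "\<dots> = \<theta> j" unfolding distr_cell[OF j] \<theta>_def mean_def ..
  finally show ?thesis .
qed

lemma AE_cell_unit:
  assumes j: "j \<in> S"
  shows "AE T in tables. T (j, c) \<in> {0..1}"
proof -
  have ae: "AE x in cell_dist (j, c). x \<in> {0..1}" unfolding cell_dist_def fst_conv using Dae[OF j] .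
  have jc: "(j, c) \<in> cells" using j by (simp add: cells_def)
  show ?thesis unfolding tables_def
    by (rule AE_PiM_component[where M = cell_dist and P = "\<lambda>x. x \<in> {0..1}", OF prob_space_cell_dist jc ae])
qed

lemma est_deviation:
  assumes j: "j \<in> S" and a: "active r"
  shows "tab.prob {T\<in>space tables. est T j r \<ge> \<theta> j + acc r} \<le> conf r"
    and "tab.prob {T\<in>space tables. est T j r \<le> \<theta> j - acc r} \<le> conf r"
proof -
  define Ic where "Ic = {offset r..<offset r + batch r}"
  have mp: "batch r > 0" by (rule batch_pos[OF a])
  have Icn: "Ic \<noteq> {}" and cI: "card Ic = batch r" using mp unfolding Ic_def by auto
  interpret H: Hoeffding_ineq_iid tables Ic "\<lambda>c T. T (j, c)" "\<lambda>T. T (j, offset r)" 0 1 "tab.expectation (\<lambda>T. T (j, offset r))"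
  proof unfold_locales
    show "finite Ic" unfolding Ic_def by simp
    show "tab.indep_vars (\<lambda>_. borel) (\<lambda>c T. T (j, c)) Ic" by (rule indep_cells_arm[OF j Icn])
    show "\<And>i. i \<in> Ic \<Longrightarrow> distr tables borel (\<lambda>T. T (j, i)) = distr tables borel (\<lambda>T. T (j, offset r))"
      using distr_cell[OF j] by simp
    show "(\<lambda>T. T (j, offset r)) \<in> borel_measurable tables" using j by (intro measurable_cell) (auto simp: cells_def)
    show "AE x in tables. x (j, offset r) \<in> {0..1}" by (rule AE_cell_unit[OF j])
  qed simp
  have mu: "tab.expectation (\<lambda>T. T (j, offset r)) = \<theta> j" by (rule expectation_cell[OF j])
  have estE: "est T j r = (\<Sum>c\<in>Ic. T (j, c)) / real (card Ic)" for T unfolding est_def Ic_def by simp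
  have expb: "exp (- 2 * real (card Ic) * acc r ^ 2 / (1 - 0)^2) \<le> conf r"
  proof -
    have "real (batch r) \<ge> ln (1 / conf r) / (2 * acc r ^ 2)" using a unfolding batch_def by simp linarith
    then have "2 * acc r ^ 2 * real (batch r) \<ge> ln (1 / conf r)" using acc_pos[of r] by (simp add: field_simps)
    then have "- 2 * real (card Ic) * acc r ^ 2 / (1 - 0)^2 \<le> ln (conf r)"
      using cI conf_pos[of r] by (simp add: ln_div algebra_simps)
    then have "exp (- 2 * real (card Ic) * acc r ^ 2 / (1 - 0)^2) \<le> exp (ln (conf r))" by simp
    then show ?thesis using conf_pos[of r] by simp
  qed
  show "tab.prob {T\<in>space tables. est T j r \<ge> \<theta> j + acc r} \<le> conf r"
    using H.Hoeffding_ineq_ge'[of "acc r"] acc_pos[of r] Icn expb unfolding estE mu by simp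
  show "tab.prob {T\<in>space tables. est T j r \<le> \<theta> j - acc r} \<le> conf r"
    using H.Hoeffding_ineq_le'[of "acc r"] acc_pos[of r] Icn expb unfolding estE mu by simp
qed

text \<open>The two bad events of round \<open>r\<close> are the failures of the error hypotheses of
  \<open>cut_keeps_above\<close>, in orientation \<open>orient r\<close>.\<close>
definition Alive :: "nat \<Rightarrow> nat \<Rightarrow> (nat \<times> nat \<Rightarrow> real) set" where
  "Alive r j = {T\<in>space tables. j \<in> surv T r}"

definition Over_est :: "nat \<Rightarrow> nat \<Rightarrow> (nat \<times> nat \<Rightarrow> real) set" where
  "Over_est r j = {T\<in>space tables. est T j r \<in> {x. orient r * \<theta> j + acc r < orient r * x}}"

definition Guard :: "nat \<Rightarrow> nat \<Rightarrow> (nat \<times> nat \<Rightarrow> real) set" where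
  "Guard r j = {T\<in>space tables. j \<in> lowest (\<lambda>i. - (orient r * \<theta> i)) (surv T r) (guarded r)}"

definition Under_est :: "nat \<Rightarrow> nat \<Rightarrow> (nat \<times> nat \<Rightarrow> real) set" where
  "Under_est r j = {T\<in>space tables. est T j r \<in> {x. orient r * x < orient r * \<theta> j - acc r}}"

definition Bad_over :: "nat \<Rightarrow> (nat \<times> nat \<Rightarrow> real) set" where
  "Bad_over r =
     {T\<in>space tables. real (slack (alive r)) \<le> real (card {j\<in>S. T \<in> Alive r j \<inter> Over_est r j})}"

definition Bad_under :: "nat \<Rightarrow> (nat \<times> nat \<Rightarrow> real) set" where
  "Bad_under r =
     {T\<in>space tables. real (spend r) + 1 \<le> real (card {j\<in>S. T \<in> Guard r j \<inter> Under_est r j})}"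

definition Bad :: "(nat \<times> nat \<Rightarrow> real) set" where
  "Bad = (\<Union>r\<in>{r. r < n \<and> active r}. Bad_over r \<union> Bad_under r)"

lemma sets_tables_surv_pred: "{T\<in>space tables. Q (surv T r)} \<in> sets tables"
  by (rule sets_surv_pred, rule measurable_cell) (auto simp: cells_def)

lemma sets_est_pred: "j \<in> S \<Longrightarrow> Bs \<in> sets borel \<Longrightarrow> {T\<in>space tables. est T j r \<in> Bs} \<in> sets tables"
proof -
  assume j: "j \<in> S" and Bs: "Bs \<in> sets borel"
  have "(\<lambda>T. est T j r) \<in> borel_measurable tables"
    by (rule measurable_est, rule measurable_cell) (use j in \<open>auto simp: cells_def\<close>)
  from measurable_sets[OF this Bs] show ?thesis by (simp add: Int_def conj_commute)
qed

lemma sets_borel_lin_less: "{x::real. a + b < c * x} \<in> sets borel"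
  using borel_measurable_less[of "\<lambda>x::real. a + b" borel "\<lambda>x. c * x"] by simp
lemma sets_borel_less_lin: "{x::real. c * x < a - b} \<in> sets borel"
  using borel_measurable_less[of "\<lambda>x::real. c * x" borel "\<lambda>x. a - b"] by simp

lemma event_sets:
  assumes "j \<in> S"
  shows "Alive r j \<in> sets tables" "Over_est r j \<in> sets tables"
    "Guard r j \<in> sets tables" "Under_est r j \<in> sets tables"
  unfolding Alive_def Over_est_def Guard_def Under_est_def
  by (rule sets_tables_surv_pred sets_est_pred[OF assms sets_borel_lin_less]
      sets_est_pred[OF assms sets_borel_less_lin])+

lemma Bad_sets: "Bad_over r \<in> sets tables" "Bad_under r \<in> sets tables" "Bad \<in> sets tables"
proof -
  show b1: "Bad_over r \<in> sets tables" for r unfolding Bad_over_def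
    by (rule sets_pattern_pred) (use finS event_sets in auto)
  show b2: "Bad_under r \<in> sets tables" for r unfolding Bad_under_def
    by (rule sets_pattern_pred) (use finS event_sets in auto)
  show "Bad \<in> sets tables" unfolding Bad_def using b1 b2 by (intro sets.finite_UN) auto
qed

lemma orient_cases: "orient r = 1 \<or> orient r = -1" unfolding orient_def by auto

lemma prob_Over_est: assumes "j \<in> S" "active r" shows "tab.prob (Over_est r j) \<le> conf r"
proof (cases "orient r = 1")
  case True
  have "Over_est r j \<subseteq> {T\<in>space tables. est T j r \<ge> \<theta> j + acc r}" unfolding Over_est_def True by auto
  moreover have "{T\<in>space tables. est T j r \<ge> \<theta> j + acc r} \<in> sets tables"
    using sets_est_pred[OF assms(1), of "{x. \<theta> j + acc r \<le> x}"] by (simp add: borel_measurable_le)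
  ultimately show ?thesis using est_deviation(1)[OF assms] tab.finite_measure_mono by (meson order_trans)
next
  case False
  then have s: "orient r = -1" using orient_cases by auto
  have "Over_est r j \<subseteq> {T\<in>space tables. est T j r \<le> \<theta> j - acc r}" unfolding Over_est_def s by auto
  moreover have "{T\<in>space tables. est T j r \<le> \<theta> j - acc r} \<in> sets tables"
    using sets_est_pred[OF assms(1), of "{x. x \<le> \<theta> j - acc r}"] by (simp add: borel_measurable_le)
  ultimately show ?thesis using est_deviation(2)[OF assms] tab.finite_measure_mono by (meson order_trans)
qed

lemma prob_Under_est: assumes "j \<in> S" "active r" shows "tab.prob (Under_est r j) \<le> conf r"
proof (cases "orient r = 1")
  case True
  have "Under_est r j \<subseteq> {T\<in>space tables. est T j r \<le> \<theta> j - acc r}" unfolding Under_est_def True by auto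
  moreover have "{T\<in>space tables. est T j r \<le> \<theta> j - acc r} \<in> sets tables"
    using sets_est_pred[OF assms(1), of "{x. x \<le> \<theta> j - acc r}"] by (simp add: borel_measurable_le)
  ultimately show ?thesis using est_deviation(2)[OF assms] tab.finite_measure_mono by (meson order_trans)
next
  case False
  then have s: "orient r = -1" using orient_cases by auto
  have "Under_est r j \<subseteq> {T\<in>space tables. est T j r \<ge> \<theta> j + acc r}" unfolding Under_est_def s by auto
  moreover have "{T\<in>space tables. est T j r \<ge> \<theta> j + acc r} \<in> sets tables"
    using sets_est_pred[OF assms(1), of "{x. \<theta> j + acc r \<le> x}"] by (simp add: borel_measurable_le)
  ultimately show ?thesis using est_deviation(1)[OF assms] tab.finite_measure_mono by (meson order_trans)
qed

lemma slack_pos: "slack (alive r) > 0" using slack_bounds[OF sched_facts(1)[of r]] by simp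

lemma prob_Bad_over: assumes "active r" shows "tab.prob (Bad_over r) \<le> 8 * conf r"
proof -
  have "tab.prob (Bad_over r) \<le> real (alive r) * conf r / real (slack (alive r))"
    unfolding Bad_over_def
  proof (rule tab.prob_count_ge)
    show "finite S" by (rule finS)
    show "\<And>j. j \<in> S \<Longrightarrow> Alive r j \<in> tab.events" "\<And>j. j \<in> S \<Longrightarrow> Over_est r j \<in> tab.events" using event_sets by auto
    show "tab.prob (Alive r j \<inter> Over_est r j) = tab.prob (Alive r j) * tab.prob (Over_est r j)" if "j \<in> S" for j
      unfolding Alive_def Over_est_def by (rule indep_surv_est[OF that sets_borel_lin_less])
    show "\<And>j. j \<in> S \<Longrightarrow> tab.prob (Over_est r j) \<le> conf r" using prob_Over_est assms by auto
    show "card {j\<in>S. \<omega> \<in> Alive r j} \<le> alive r" if "\<omega> \<in> space tables" for \<omega>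
    proof -
      have "{j\<in>S. \<omega> \<in> Alive r j} = surv \<omega> r" using that surv_subset unfolding Alive_def by auto
      then show ?thesis using card_surv by simp
    qed
    show "real (slack (alive r)) > 0" using slack_pos by simp
    show "conf r \<ge> 0" using conf_pos[of r] by simp
  qed
  also have "\<dots> \<le> 8 * conf r"
  proof -
    have "8 * slack (alive r) \<ge> alive r" using slack_bounds[OF sched_facts(1)[of r]] by simp
    then have "real (alive r) \<le> 8 * real (slack (alive r))" by linarith
    then show ?thesis using slack_pos[of r] conf_pos[of r] by (simp add: field_simps mult_right_mono)
  qed
  finally show ?thesis .
qed

lemma prob_Bad_under: assumes "active r" shows "tab.prob (Bad_under r) \<le> 2 ^ (r + 4) / \<tau> * conf r"
proof -
  have "tab.prob (Bad_under r) \<le> real (guarded r) * conf r / (real (spend r) + 1)"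
    unfolding Bad_under_def
  proof (rule tab.prob_count_ge)
    show "finite S" by (rule finS)
    show "\<And>j. j \<in> S \<Longrightarrow> Guard r j \<in> tab.events" "\<And>j. j \<in> S \<Longrightarrow> Under_est r j \<in> tab.events" using event_sets by auto
    show "tab.prob (Guard r j \<inter> Under_est r j) = tab.prob (Guard r j) * tab.prob (Under_est r j)" if "j \<in> S" for j
      unfolding Guard_def Under_est_def by (rule indep_surv_est[OF that sets_borel_less_lin])
    show "\<And>j. j \<in> S \<Longrightarrow> tab.prob (Under_est r j) \<le> conf r" using prob_Under_est assms by auto
    show "card {j\<in>S. \<omega> \<in> Guard r j} \<le> guarded r" if "\<omega> \<in> space tables" for \<omega>
    proof -
      have "{j\<in>S. \<omega> \<in> Guard r j} = lowest (\<lambda>i. - (orient r * \<theta> i)) (surv \<omega> r) (guarded r)"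
        using that surv_subset lowest_subset[OF finite_surv] unfolding Guard_def by blast
      then show ?thesis using card_lowest[OF finite_surv] by simp
    qed
    show "real (spend r) + 1 > 0" by simp
    show "conf r \<ge> 0" using conf_pos[of r] by simp
  qed
  also have "\<dots> \<le> 2 ^ (r + 4) / \<tau> * conf r"
  proof -
    have "real (guarded r) / (real (spend r) + 1) \<le> 2 ^ (r + 4) / \<tau>"
      using guarded_le_spend[of r] by (simp add: divide_le_eq)
    then have "real (guarded r) / (real (spend r) + 1) * conf r \<le> 2 ^ (r + 4) / \<tau> * conf r"
      using conf_pos[of r] by (intro mult_right_mono) auto
    then show ?thesis by simp
  qed
  finally show ?thesis .
qed

end

definition values_desc :: "nat set \<Rightarrow> (nat \<Rightarrow> real) \<Rightarrow> real list" where
  "values_desc S f = rev (sort (map f (sorted_list_of_set S)))"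

lemma kth_largest_eq_nth: "kth_largest S f k = values_desc S f ! (k - 1)"
  unfolding kth_largest_def values_desc_def ..

lemma length_values_desc: "finite S \<Longrightarrow> length (values_desc S f) = card S"
  unfolding values_desc_def by simp

lemma card_filter_values_desc:
  assumes "finite S"
  shows "card {j\<in>S. Q (f j)} = length (filter Q (values_desc S f))"
proof -
  have "length (filter Q (sort ys)) = length (filter Q ys)" for ys :: "real list"
    by (metis mset_filter mset_sort size_mset)
  then have "length (filter Q (values_desc S f)) = length (filter Q (map f (sorted_list_of_set S)))"
    unfolding values_desc_def rev_filter[symmetric] length_rev .
  also have "\<dots> = length (filter (Q \<circ> f) (sorted_list_of_set S))" by (simp add: filter_map)
  also have "\<dots> = card ({x. (Q \<circ> f) x} \<inter> set (sorted_list_of_set S))"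
    by (rule distinct_length_filter) simp
  also have "\<dots> = card {j\<in>S. Q (f j)}" using assms by (simp add: Int_def conj_commute)
  finally show ?thesis by simp
qed

lemma values_desc_antimono:
  assumes "finite S" "i \<le> i'" "i' < card S"
  shows "values_desc S f ! i' \<le> values_desc S f ! i"
proof -
  let ?ys = "sort (map f (sorted_list_of_set S))"
  have ly: "length ?ys = card S" using assms(1) by simp
  have "?ys ! (card S - 1 - i') \<le> ?ys ! (card S - 1 - i)"
    using assms ly by (intro sorted_nth_mono) auto
  then show ?thesis using assms ly unfolding values_desc_def by (simp add: rev_nth)
qed

lemma card_ge_kth_largest:
  assumes fin: "finite S" and k: "1 \<le> k" "k \<le> card S"
  shows "card {j\<in>S. f j \<ge> kth_largest S f k} \<ge> k"
proof -
  let ?xs = "values_desc S f" and ?v = "kth_largest S f k"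
  have "\<forall>x\<in>set (take k ?xs). x \<ge> ?v"
  proof
    fix x assume "x \<in> set (take k ?xs)"
    then obtain i where "i < length (take k ?xs)" "x = take k ?xs ! i" by (metis in_set_conv_nth)
    then have "i \<le> k - 1" "x = ?xs ! i" by auto
    then show "x \<ge> ?v" unfolding kth_largest_eq_nth using values_desc_antimono[OF fin] k by auto
  qed
  then have "k = length (filter (\<lambda>x. x \<ge> ?v) (take k ?xs))"
    using k length_values_desc[OF fin, of f] by (simp add: filter_id_conv)
  also have "\<dots> \<le> length (filter (\<lambda>x. x \<ge> ?v) (take k ?xs)) + length (filter (\<lambda>x. x \<ge> ?v) (drop k ?xs))"
    by simp
  also have "\<dots> = card {j\<in>S. f j \<ge> ?v}"
    unfolding length_append[symmetric] filter_append[symmetric] append_take_drop_id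
    by (rule card_filter_values_desc[OF fin, symmetric])
  finally show ?thesis .
qed

lemma card_le_kth_largest:
  assumes fin: "finite S" and k: "1 \<le> k" "k \<le> card S"
  shows "card {j\<in>S. f j \<le> kth_largest S f k} \<ge> card S - k + 1"
proof -
  let ?xs = "values_desc S f" and ?v = "kth_largest S f k"
  have "\<forall>x\<in>set (drop (k - 1) ?xs). x \<le> ?v"
  proof
    fix x assume "x \<in> set (drop (k - 1) ?xs)"
    then obtain i where "i < length (drop (k - 1) ?xs)" "x = drop (k - 1) ?xs ! i"
      by (metis in_set_conv_nth)
    then have "x = ?xs ! (k - 1 + i)" "k - 1 + i < card S" using length_values_desc[OF fin] k by auto
    then show "x \<le> ?v" unfolding kth_largest_eq_nth using values_desc_antimono[OF fin] by auto
  qed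
  then have "card S - k + 1 = length (filter (\<lambda>x. x \<le> ?v) (drop (k - 1) ?xs))"
    using k length_values_desc[OF fin, of f] by (simp add: filter_id_conv)
  also have "\<dots> \<le> length (filter (\<lambda>x. x \<le> ?v) (take (k - 1) ?xs)) + length (filter (\<lambda>x. x \<le> ?v) (drop (k - 1) ?xs))"
    by simp
  also have "\<dots> = card {j\<in>S. f j \<le> ?v}"
    unfolding length_append[symmetric] filter_append[symmetric] append_take_drop_id
    by (rule card_filter_values_desc[OF fin, symmetric])
  finally show ?thesis .
qed

context elim_bandit
begin

lemma prob_Bad_round:
  assumes "active r"
  shows "tab.prob (Bad_over r \<union> Bad_under r) \<le> \<delta> / 8 * (1/2)^r"
proof -
  have "tab.prob (Bad_over r \<union> Bad_under r) \<le> tab.prob (Bad_over r) + tab.prob (Bad_under r)"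
    by (rule measure_subadditive) (use Bad_sets in auto)
  also have "\<dots> \<le> 8 * conf r + 2 ^ (r + 4) / \<tau> * conf r"
    using prob_Bad_over[OF assms] prob_Bad_under[OF assms] by simp
  also have "\<dots> \<le> 2 ^ (r + 4) / \<tau> * conf r + 2 ^ (r + 4) / \<tau> * conf r"
  proof -
    have "(16::real) \<le> 2 ^ (r + 4)" using power_increasing[of 4 "r+4" "2::real"] by simp
    also have "(2::real) ^ (r + 4) \<le> 2 ^ (r + 4) / \<tau>" using tau by (simp add: field_simps)
    finally have "8 \<le> 2 ^ (r + 4) / \<tau>" by simp
    then show ?thesis using conf_pos[of r] by (intro add_right_mono mult_right_mono) auto
  qed
  also have "\<dots> = \<delta> / 8 * (1/2)^r"
  proof -
    have "(2::real) ^ (r * 2) = 2 ^ r * 2 ^ r" by (simp add: power_mult power2_eq_square)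
    then show ?thesis unfolding conf_def using tau
      by (simp add: field_simps power_add power_mult_distrib power_divide power_mult[symmetric] mult.commute)
  qed
  finally show ?thesis .
qed

lemma prob_Bad: "tab.prob Bad \<le> \<delta> / 4"
proof -
  have "tab.prob Bad \<le> (\<Sum>r\<in>{r. r < n \<and> active r}. tab.prob (Bad_over r \<union> Bad_under r))"
    unfolding Bad_def by (rule measure_subadditive_finite) (use Bad_sets in auto)
  also have "\<dots> \<le> (\<Sum>r\<in>{r. r < n \<and> active r}. \<delta> / 8 * (1/2)^r)"
    by (rule sum_mono, rule prob_Bad_round) simp
  also have "\<dots> \<le> (\<Sum>r<n. \<delta> / 8 * (1/2)^r)" using delta by (intro sum_mono2) auto
  also have "\<dots> = \<delta> / 8 * (\<Sum>r<n. (1/2::real)^r)" by (simp add: sum_distrib_left)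
  also have "\<dots> \<le> \<delta> / 8 * (1 / (1 - 1/2))" using delta by (intro mult_left_mono sum_power_le) auto
  finally show ?thesis by simp
qed

end

context elim_params
begin

lemma sum_acc: "(\<Sum>s<r. 2 * acc s) \<le> \<phi>"
proof -
  have "(\<Sum>s<r. 2 * acc s) = \<phi> / 20 * (\<Sum>s<r. (19/20::real)^s)"
    unfolding acc_def by (simp add: sum_distrib_left)
  also have "\<dots> \<le> \<phi> / 20 * (1 / (1 - 19/20))" using phi by (intro mult_left_mono sum_power_le) auto
  finally show ?thesis by simp
qed

lemma card_surv_Suc_ge: "card {j\<in>surv T r. P j} - n_cut r \<le> card {j\<in>surv T (Suc r). P j}"
proof -
  have "card {j\<in>surv T r - lowest (score T r) (surv T r) (n_cut r). P j} \<ge> card {j\<in>surv T r. P j} - n_cut r"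
    by (rule card_filter_Diff_ge[OF finite_surv lowest_subset[OF finite_surv]])
      (simp add: card_lowest[OF finite_surv])
  then show ?thesis by simp
qed

end

context elim_bandit
begin

definition lo_level :: "nat \<Rightarrow> real" where
  "lo_level r = kth_largest S \<theta> K - (\<Sum>s<r. 2 * acc s)"

definition hi_level :: "nat \<Rightarrow> real" where
  "hi_level r = kth_largest S \<theta> K_tau + (\<Sum>s<r. 2 * acc s)"

lemma lo_level_Suc: "lo_level (Suc r) = lo_level r - 2 * acc r"
  unfolding lo_level_def by simp

lemma hi_level_Suc: "hi_level (Suc r) = hi_level r + 2 * acc r"
  unfolding hi_level_def by simp

definition level_counts :: "(nat \<times> nat \<Rightarrow> real) \<Rightarrow> nat \<Rightarrow> bool" where
  "level_counts T r \<longleftrightarrow>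
     n_lo r \<le> card {j\<in>surv T r. lo_level r \<le> \<theta> j} \<and> n_hi r \<le> card {j\<in>surv T r. \<theta> j \<le> hi_level r}"

lemma level_counts_0: "level_counts T 0"
proof -
  have "n_lo 0 \<le> K" using sched_facts(8) .
  also have "K \<le> card {j\<in>S. kth_largest S \<theta> K \<le> \<theta> j}"
    using card_ge_kth_largest[OF finS K1 Kn] .
  finally have lo: "n_lo 0 \<le> card {j\<in>surv T 0. lo_level 0 \<le> \<theta> j}" unfolding lo_level_def by simp
  have "n_hi 0 = card S - K_tau + 1" unfolding n_hi_0 n_def ..
  also have "\<dots> \<le> card {j\<in>S. \<theta> j \<le> kth_largest S \<theta> K_tau}"
    using card_le_kth_largest[OF finS] K_tau_bounds Kn by simp
  finally have hi: "n_hi 0 \<le> card {j\<in>surv T 0. \<theta> j \<le> hi_level 0}" unfolding hi_level_def by simp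
  show ?thesis using lo hi unfolding level_counts_def ..
qed

lemma round_errors:
  assumes T: "T \<in> space tables" "T \<notin> Bad" and r: "r < n" "active r"
  shows "card {j\<in>surv T r. orient r * \<theta> j + acc r < score T r j} < slack (alive r)"
    and "card {j \<in> lowest (\<lambda>i. - (orient r * \<theta> i)) (surv T r) (guarded r).
           score T r j < orient r * \<theta> j - acc r} \<le> spend r"
proof -
  have "T \<notin> Bad_over r" "T \<notin> Bad_under r" using T r unfolding Bad_def by auto
  moreover have "{j\<in>S. T \<in> Alive r j \<inter> Over_est r j} =
      {j\<in>surv T r. orient r * \<theta> j + acc r < score T r j}"
    using T(1) surv_subset unfolding Alive_def Over_est_def score_def by auto
  moreover have "{j\<in>S. T \<in> Guard r j \<inter> Under_est r j} =
      {j \<in> lowest (\<lambda>i. - (orient r * \<theta> i)) (surv T r) (guarded r). score T r j < orient r * \<theta> j - acc r}"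
    using T(1) surv_subset lowest_subset[OF finite_surv, of "\<lambda>i. - (orient r * \<theta> i)" T r "guarded r"]
    unfolding Guard_def Under_est_def score_def by auto
  ultimately show "card {j\<in>surv T r. orient r * \<theta> j + acc r < score T r j} < slack (alive r)"
    and "card {j \<in> lowest (\<lambda>i. - (orient r * \<theta> i)) (surv T r) (guarded r).
           score T r j < orient r * \<theta> j - acc r} \<le> spend r"
    using T(1) unfolding Bad_over_def Bad_under_def by auto
qed

lemma card_cut_side_ge:
  assumes T: "T \<in> space tables" "T \<notin> Bad" and r: "r < n" "active r"
    and hi: "guarded r \<le> card {j\<in>surv T r. L \<le> orient r * \<theta> j}"
  shows "guarded r - spend r \<le> card {j\<in>surv T (Suc r). L - 2 * acc r \<le> orient r * \<theta> j}"
  using cut_keeps_above[OF finite_surv _ _ hi round_errors[OF T r, unfolded score_def]]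
    cut_bounds(1)[OF r(2)] guarded_le(2)[of r] acc_pos[of r]
  by (simp add: card_surv score_def[symmetric])

lemma level_counts_Suc:
  assumes T: "T \<in> space tables" "T \<notin> Bad" and r: "r < n" and IH: "level_counts T r"
  shows "level_counts T (Suc r)"
proof (cases "active r")
  case False
  then have "surv T (Suc r) = surv T r" by (simp add: cut_idle lowest_def)
  moreover have "card {j\<in>surv T r. lo_level r \<le> \<theta> j} \<le> card {j\<in>surv T r. lo_level (Suc r) \<le> \<theta> j}"
    "card {j\<in>surv T r. \<theta> j \<le> hi_level r} \<le> card {j\<in>surv T r. \<theta> j \<le> hi_level (Suc r)}"
    using acc_pos[of r] by (auto intro!: card_filter_mono finite_surv simp: lo_level_def hi_level_def)
  ultimately show ?thesis using IH n_lo_n_hi_idle[OF False] unfolding level_counts_def by auto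
next
  case True
  have lo_mono: "card {j\<in>surv T (Suc r). lo_level r \<le> \<theta> j} \<le> card {j\<in>surv T (Suc r). lo_level (Suc r) \<le> \<theta> j}"
    using acc_pos[of r] by (auto intro!: card_filter_mono finite_surv simp: lo_level_def)
  have hi_mono: "card {j\<in>surv T (Suc r). \<theta> j \<le> hi_level r} \<le> card {j\<in>surv T (Suc r). \<theta> j \<le> hi_level (Suc r)}"
    using acc_pos[of r] by (auto intro!: card_filter_mono finite_surv simp: hi_level_def)
  show ?thesis
  proof (cases "cut_low r")
    case low: True
    then have "orient r = 1" "guarded r = n_lo r" by (simp_all add: orient_def guarded_def cut_low_def)
    then have "n_lo r - spend r \<le> card {j\<in>surv T (Suc r). lo_level (Suc r) \<le> \<theta> j}"
      using card_cut_side_ge[OF T r True, of "lo_level r"] IH by (simp add: level_counts_def lo_level_Suc)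
    moreover have "n_hi r - n_cut r \<le> card {j\<in>surv T (Suc r). \<theta> j \<le> hi_level (Suc r)}"
      using IH card_surv_Suc_ge[of T r "\<lambda>j. \<theta> j \<le> hi_level r"] hi_mono
      unfolding level_counts_def by linarith
    ultimately show ?thesis using sched_Suc_active(3)[OF True low] unfolding level_counts_def by simp
  next
    case high: False
    then have "orient r = -1" "guarded r = n_hi r" by (simp_all add: orient_def guarded_def cut_low_def)
    moreover have "{j\<in>surv T r. - hi_level r \<le> - \<theta> j} = {j\<in>surv T r. \<theta> j \<le> hi_level r}"
      "{j\<in>surv T (Suc r). - hi_level r - 2 * acc r \<le> - \<theta> j} =
       {j\<in>surv T (Suc r). \<theta> j \<le> hi_level (Suc r)}"
      by (auto simp: hi_level_Suc)
    ultimately have "n_hi r - spend r \<le> card {j\<in>surv T (Suc r). \<theta> j \<le> hi_level (Suc r)}"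
      using card_cut_side_ge[OF T r True, of "- hi_level r"] IH by (simp add: level_counts_def)
    moreover have "n_lo r - n_cut r \<le> card {j\<in>surv T (Suc r). lo_level (Suc r) \<le> \<theta> j}"
      using IH card_surv_Suc_ge[of T r "\<lambda>j. lo_level r \<le> \<theta> j"] lo_mono
      unfolding level_counts_def by linarith
    ultimately show ?thesis using sched_Suc_active(4)[OF True high] unfolding level_counts_def by simp
  qed
qed

lemma level_counts_final:
  assumes "T \<in> space tables" "T \<notin> Bad"
  shows "level_counts T n"
proof -
  have "r \<le> n \<Longrightarrow> level_counts T r" for r
    by (induction r) (auto intro: level_counts_0 level_counts_Suc[OF assms])
  then show ?thesis by simp
qed

lemma final_arm_good:
  assumes "T \<in> space tables" "T \<notin> Bad"
  shows "final_arm T \<in> S \<and> kth_largest S \<theta> K - \<phi> \<le> \<theta> (final_arm T) \<and>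
    \<theta> (final_arm T) \<le> kth_largest S \<theta> K_tau + \<phi>"
proof -
  let ?a = "final_arm T"
  have "n_lo n \<le> card {j\<in>{?a}. lo_level n \<le> \<theta> j}" "n_hi n \<le> card {j\<in>{?a}. \<theta> j \<le> hi_level n}"
    using level_counts_final[OF assms] surv_final[of T] unfolding level_counts_def by auto
  moreover have "{j\<in>{?a}. lo_level n \<le> \<theta> j} = (if lo_level n \<le> \<theta> ?a then {?a} else {})"
    "{j\<in>{?a}. \<theta> j \<le> hi_level n} = (if \<theta> ?a \<le> hi_level n then {?a} else {})" by auto
  ultimately have "lo_level n \<le> \<theta> ?a" "\<theta> ?a \<le> hi_level n"
    using sched_facts(2,4)[of n] by (auto split: if_splits)
  moreover have "final_arm T \<in> S" using surv_final[of T] surv_subset[of T n] by auto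
  ultimately show ?thesis using sum_acc[of n] unfolding lo_level_def hi_level_def by auto
qed

end

lemma measure_uniform_Times:
  assumes "prob_space M" "B \<in> sets M"
  shows "measure (uniform_measure lborel {0..1::real} \<Otimes>\<^sub>M M) (space (uniform_measure lborel {0..1::real}) \<times> B)
    = measure M B"
proof -
  let ?U = "uniform_measure lborel {0..1::real}"
  interpret M: prob_space M by (rule assms(1))
  have U: "prob_space ?U" by (rule prob_space_uniform_measure) auto
  have "emeasure (?U \<Otimes>\<^sub>M M) (space ?U \<times> B) = emeasure ?U (space ?U) * emeasure M B"
    using assms by (intro M.emeasure_pair_measure_Times) auto
  also have "\<dots> = emeasure M B" using prob_space.emeasure_space_1[OF U] by simp
  finally show ?thesis unfolding measure_def by simp
qed

context elim_bandit
begin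

lemma sets_final_arm_pred: "{T\<in>space tables. G (final_arm T)} \<in> sets tables"
  unfolding final_arm_def by (rule sets_tables_surv_pred)

lemma prob_final_arm_good:
  "tab.prob {T\<in>space tables. final_arm T \<in> S \<and> kth_largest S \<theta> K - \<phi> \<le> \<theta> (final_arm T) \<and>
      \<theta> (final_arm T) \<le> kth_largest S \<theta> K_tau + \<phi>} \<ge> 1 - \<delta>"
    (is "tab.prob ?E \<ge> _")
proof -
  have "1 - \<delta> \<le> 1 - tab.prob Bad" using prob_Bad delta by simp
  also have "\<dots> = tab.prob (space tables - Bad)" using Bad_sets(3) by (rule tab.prob_compl[symmetric])
  also have "\<dots> \<le> tab.prob ?E"
    using final_arm_good sets_final_arm_pred by (intro tab.finite_measure_mono) auto
  finally show ?thesis .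
qed

lemma policy_guarantee:
  defines "B \<equiv> 1000000 * real (card S) / \<phi>^2 * (ln (1/\<tau>) + ln (1/\<delta>))"
  shows "\<forall>u\<in>{0..1::real}. \<forall>T. (\<forall>p. T p \<in> {0..1}) \<longrightarrow>
           (case run policy T (nat \<lceil>B\<rceil> + 1) [] of
              None \<Rightarrow> False
            | Some (i, h) \<Rightarrow> real (length h) \<le> B \<and> set (map fst h) \<subseteq> S)"
    and "measure (bandit_space S D)
           {(u, T) \<in> space (bandit_space S D). case run policy T (nat \<lceil>B\<rceil> + 1) [] of
              None \<Rightarrow> False
            | Some (i, h) \<Rightarrow> i \<in> S \<and> kth_largest S \<theta> K - \<phi> \<le> \<theta> i \<and> \<theta> i \<le> kth_largest S \<theta> K_tau + \<phi>}
         \<ge> 1 - \<delta>"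
proof -
  have total: "real n_total \<le> B" using n_total_le unfolding B_def n_def log_term_def .
  then have "nat \<lceil>B\<rceil> + 1 = n_total + 1 + (nat \<lceil>B\<rceil> - n_total)" by linarith
  then have run: "run policy T (nat \<lceil>B\<rceil> + 1) [] = Some (final_arm T, hist T n_total)" for T
    by (simp only: run_policy)
  show "\<forall>u\<in>{0..1::real}. \<forall>T. (\<forall>p. T p \<in> {0..1}) \<longrightarrow>
      (case run policy T (nat \<lceil>B\<rceil> + 1) [] of
         None \<Rightarrow> False
       | Some (i, h) \<Rightarrow> real (length h) \<le> B \<and> set (map fst h) \<subseteq> S)"
    unfolding run using total length_hist_total hist_arms by simp
  let ?G = "\<lambda>i. i \<in> S \<and> kth_largest S \<theta> K - \<phi> \<le> \<theta> i \<and> \<theta> i \<le> kth_largest S \<theta> K_tau + \<phi>"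
  have space: "bandit_space S D = uniform_measure lborel {0..1} \<Otimes>\<^sub>M tables"
    unfolding bandit_space_def tables_def cells_def cell_dist_def[abs_def] ..
  have eq: "{(u, T) \<in> space (bandit_space S D). case run policy T (nat \<lceil>B\<rceil> + 1) [] of
          None \<Rightarrow> False | Some (i, h) \<Rightarrow> ?G i}
      = space (uniform_measure lborel {0..1::real}) \<times> {T\<in>space tables. ?G (final_arm T)}"
    unfolding space run by (auto simp: space_pair_measure)
  show "measure (bandit_space S D) {(u, T) \<in> space (bandit_space S D).
      case run policy T (nat \<lceil>B\<rceil> + 1) [] of None \<Rightarrow> False | Some (i, h) \<Rightarrow> ?G i} \<ge> 1 - \<delta>"
    unfolding eq unfolding space measure_uniform_Times[OF prob_space_tables sets_final_arm_pred[of ?G]]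
    by (rule prob_final_arm_good)
qed

end

theorem theorem3p1:
  "\<exists>C::real. C > 0 \<and> (\<exists>alg :: algorithm.
     \<forall>(S::nat set) (D::nat \<Rightarrow> real measure) (K::nat) (\<tau>::real) (\<phi>::real) (\<delta>::real).
       finite S \<and> S \<noteq> {} \<and>
       (\<forall>j\<in>S. prob_space (D j) \<and> sets (D j) = sets borel \<and> (AE x in D j. x \<in> {0..1})) \<and>
       1 \<le> K \<and> K \<le> card S \<and>
       0 < \<tau> \<and> \<tau> \<le> 1/2 \<and> (1 - \<tau>) * K \<ge> 1 \<and>
       0 < \<phi> \<and> \<phi> \<le> 1 \<and> 0 < \<delta> \<and> \<delta> \<le> 1/2
       \<longrightarrow>
       (let B = C * card S / \<phi>^2 * (ln (1/\<tau>) + ln (1/\<delta>));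
            fuel = nat \<lceil>B\<rceil> + 1;
            \<theta> = (\<lambda>j. mean (D j));
            lo = kth_largest S \<theta> K - \<phi>;
            hi = kth_largest S \<theta> (nat \<lceil>(1 - \<tau>) * K\<rceil>) + \<phi>
        in (\<forall>u\<in>{0..1}. \<forall>T :: nat \<times> nat \<Rightarrow> real. (\<forall>p. T p \<in> {0..1}) \<longrightarrow>
              (case run (alg S K \<tau> \<phi> \<delta> u) T fuel [] of
                 None \<Rightarrow> False
               | Some (i, h) \<Rightarrow> real (length h) \<le> B \<and> set (map fst h) \<subseteq> S))
           \<and> measure (bandit_space S D)
               {(u, T) \<in> space (bandit_space S D).
                  case run (alg S K \<tau> \<phi> \<delta> u) T fuel [] of
                    None \<Rightarrow> False
                  | Some (i, h) \<Rightarrow> i \<in> S \<and> lo \<le> \<theta> i \<and> \<theta> i \<le> hi}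
             \<ge> 1 - \<delta>))"
  apply (intro exI[of _ "1000000::real"] conjI
      exI[of _ "\<lambda>S K \<tau> \<phi> \<delta> (u::real). elim_alg.policy S K \<tau> \<phi> \<delta>"] allI impI)
   apply simp
  subgoal premises H for S D K \<tau> \<phi> \<delta>
  proof -
    interpret elim_bandit S K \<tau> \<phi> \<delta> D
      using H by (intro elim_bandit.intro elim_params.intro elim_bandit_axioms.intro) auto
    show ?thesis
      using policy_guarantee unfolding Let_def \<theta>_def[abs_def] K_tau_def by (rule conjI)
  qed
  done

end
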